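(* Let $\begin{bmatrix}A'&B'\\C'&D\end{bmatrix}$ and $\begin{bmatrix}A''&B''\\C''&D\end{bmatrix}$ be connecting operators of two observable, commutative, weakly coisometric realizations of a Schur-class function $S\in{\mathcal S}_d({\mathcal U},{\mathcal Y})$, with state spaces ${\mathcal X}'$ and ${\mathcal X}''$. Then the output pairs $(C',{\mathbf A}')$ and $(C'',{\mathbf A}'')$ are unitarily equivalent, i.e., there is a unitary $U:{\mathcal X}'\to{\mathcal X}''$ with $C''U=C'$ and $A''_jU=UA'_j$ for $j=1,\dots,d$.
   Context: Let ${\mathbb B}^d=\{\lambda\in{\mathbb C}^d:\langle\lambda,\lambda\rangle<1\}$. ${\mathcal H}_{\mathcal Y}(k_d)$ is the reproducing kernel Hilbert space of ${\mathcal Y}$-valued functions on ${\mathbb B}^d$ with kernel $k_d(\lambda,\zeta)I_{\mathcal Y}$, $k_d(\lambda,\zeta)=1/(1-\langle\lambda,\zeta\rangle)$. ${\mathcal S}_d({\mathcal U},{\mathcal Y})$ is the set of ${\mathcal L}({\mathcal U},{\mathcal Y})$-valued holomorphic $S$ on ${\mathbb B}^d$ such that $M_S:f\mapsto Sf$ is a contraction from ${\mathcal H}_{\mathcal U}(k_d)$ into ${\mathcal H}_{\mathcal Y}(k_d)$. A realization of $S$: Hilbert space ${\mathcal X}$, $A_j\in{\mathcal L}({\mathcal X})$, $B_j\in{\mathcal L}({\mathcal U},{\mathcal X})$, $C\in{\mathcal L}({\mathcal X},{\mathcal Y})$, $D\in{\mathcal L}({\mathcal U},{\mathcal Y})$ with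 $S(\lambda)=D+C(I-Z(\lambda)A)^{-1}Z(\lambda)B$, where $A=\mathrm{col}(A_j)$, ${\mathbf A}=(A_1,\dots,A_d)$, $B=\mathrm{col}(B_j)$, $Z(\lambda)=[\lambda_1I_{\mathcal X}\ \cdots\ \lambda_dI_{\mathcal X}]$; connecting operator ${\mathbf U}=\begin{bmatrix}A&B\\C&D\end{bmatrix}$. Commutative: the $A_j$ pairwise commute. Observable: $C(I-Z(\lambda)A)^{-1}x\equiv0$ implies $x=0$. Weakly coisometric: ${\mathbf U}$ is a contraction and ${\mathbf U}^*$ is isometric on ${\mathcal D}\oplus{\mathcal Y}$, ${\mathcal D}=\overline{\mathrm{span}}\{Z(\zeta)^*(I-A^*Z(\zeta)^* )^{-1}C^*y:\zeta\in{\mathbb B}^d,y\in{\mathcal Y}\}\subset{\mathcal X}^d$. *)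

theory Defs
  imports "HOL-Analysis.Analysis"
begin

text \<open>HOL-Analysis only provides real inner product spaces, so we introduce complex
inner product spaces as normed spaces with a complex scalar multiplication (extending
the real one) and a complex inner product, linear in the first and conjugate-linear in
the second argument, inducing the norm.\<close>

class cinner_space = real_normed_vector +
  fixes cscale :: "complex \<Rightarrow> 'a \<Rightarrow> 'a"  (infixr \<open>*\<^sub>C\<close> 75)
    and cinner :: "'a \<Rightarrow> 'a \<Rightarrow> complex"
  assumes cscale_add_right: "c *\<^sub>C (x + y) = c *\<^sub>C x + c *\<^sub>C y"
    and cscale_add_left: "(a + b) *\<^sub>C x = a *\<^sub>C x + b *\<^sub>C x"
    and cscale_cscale: "a *\<^sub>C (b *\<^sub>C x) = (a * b) *\<^sub>C x"
    and cscale_one: "1 *\<^sub>C x = x"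
    and cscale_of_real: "complex_of_real r *\<^sub>C x = r *\<^sub>R x"
    and cinner_commute: "cinner x y = cnj (cinner y x)"
    and cinner_add_left: "cinner (x + y) z = cinner x z + cinner y z"
    and cinner_cscale_left: "cinner (c *\<^sub>C x) y = c * cinner x y"
    and cinner_self_norm: "cinner x x = complex_of_real ((norm x)\<^sup>2)"

class chilbert = cinner_space + complete_space

definition bounded_clinear :: "('a::cinner_space \<Rightarrow> 'b::cinner_space) \<Rightarrow> bool" where
  "bounded_clinear T \<longleftrightarrow>
     (\<forall>x y. T (x + y) = T x + T y) \<and> (\<forall>c x. T (c *\<^sub>C x) = c *\<^sub>C T x) \<and>
     (\<exists>K. \<forall>x. norm (T x) \<le> norm x * K)"

text \<open>Hilbert-space adjoint (exists for bounded operators between Hilbert spaces).\<close>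
definition adjoint :: "('a::cinner_space \<Rightarrow> 'b::cinner_space) \<Rightarrow> 'b \<Rightarrow> 'a" where
  "adjoint T = (SOME T'. \<forall>x y. cinner (T x) y = cinner x (T' y))"

definition unitary :: "('a::cinner_space \<Rightarrow> 'b::cinner_space) \<Rightarrow> bool" where
  "unitary U \<longleftrightarrow> bounded_clinear U \<and> bij U \<and> (\<forall>x. norm (U x) = norm x)"

text \<open>Points of \<open>\<complex>\<^sup>d\<close> are functions \<open>'d \<Rightarrow> complex\<close> for a finite index type \<open>'d\<close>
(so \<open>d = CARD('d)\<close>).\<close>

definition cdot :: "('d::finite \<Rightarrow> complex) \<Rightarrow> ('d \<Rightarrow> complex) \<Rightarrow> complex" where
  "cdot l \<zeta> = (\<Sum>j\<in>UNIV. l j * cnj (\<zeta> j))"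

definition ballB :: "('d::finite \<Rightarrow> complex) set" where
  "ballB = {l. (\<Sum>j\<in>UNIV. (cmod (l j))\<^sup>2) < 1}"

definition kd :: "('d::finite \<Rightarrow> complex) \<Rightarrow> ('d \<Rightarrow> complex) \<Rightarrow> complex" where
  "kd l \<zeta> = 1 / (1 - cdot l \<zeta>)"

text \<open>\<open>in_Hkd_le f M\<close>: \<open>f\<close> belongs to the reproducing kernel Hilbert space
\<open>\<H>\<^sub>\<Y>(k\<^sub>d)\<close> with kernel \<open>k\<^sub>d(l,\<zeta>) I\<^sub>\<Y>\<close> and \<open>\<parallel>f\<parallel> \<le> M\<close>.  This is the standard
description of an RKHS: \<open>\<langle>f, \<Sum>\<^sub>i k(\<cdot>,\<zeta>\<^sub>i)y\<^sub>i\<rangle> = \<Sum>\<^sub>i \<langle>f(\<zeta>\<^sub>i),y\<^sub>i\<rangle>\<close> and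
\<open>\<parallel>\<Sum>\<^sub>i k(\<cdot>,\<zeta>\<^sub>i)y\<^sub>i\<parallel>\<^sup>2 = \<Sum>\<^sub>i\<^sub>,\<^sub>l k(\<zeta>\<^sub>l,\<zeta>\<^sub>i)\<langle>y\<^sub>i,y\<^sub>l\<rangle>\<close>.\<close>
definition in_Hkd_le :: "(('d::finite \<Rightarrow> complex) \<Rightarrow> 'y::cinner_space) \<Rightarrow> real \<Rightarrow> bool" where
  "in_Hkd_le f M \<longleftrightarrow> 0 \<le> M \<and>
     (\<forall>(n::nat) (\<zeta>::nat \<Rightarrow> ('d \<Rightarrow> complex)) (y::nat \<Rightarrow> 'y). (\<forall>i<n. \<zeta> i \<in> ballB) \<longrightarrow>
        (cmod (\<Sum>i<n. cinner (f (\<zeta> i)) (y i)))\<^sup>2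
          \<le> M\<^sup>2 * Re (\<Sum>i<n. \<Sum>l<n. kd (\<zeta> l) (\<zeta> i) * cinner (y i) (y l)))"

text \<open>Holomorphy of an operator-valued function on the ball: (weakly) holomorphic in each
variable separately, which by Hartogs' theorem is holomorphy on the ball.\<close>
definition op_holomorphic_ball ::
  "(('d::finite \<Rightarrow> complex) \<Rightarrow> 'u::cinner_space \<Rightarrow> 'y::cinner_space) \<Rightarrow> bool" where
  "op_holomorphic_ball S \<longleftrightarrow>
     (\<forall>l\<in>ballB. bounded_clinear (S l)) \<and>
     (\<forall>l\<in>ballB. \<forall>j u y. (\<lambda>t. cinner (S (l(j := t)) u) y) field_differentiable (at (l j)))"

text \<open>Schur class \<open>\<S>\<^sub>d(\<U>,\<Y>)\<close>: holomorphic and \<open>M\<^sub>S\<close> is a contraction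
\<open>\<H>\<^sub>\<U>(k\<^sub>d) \<rightarrow> \<H>\<^sub>\<Y>(k\<^sub>d)\<close>.\<close>
definition schur_class ::
  "(('d::finite \<Rightarrow> complex) \<Rightarrow> 'u::cinner_space \<Rightarrow> 'y::cinner_space) \<Rightarrow> bool" where
  "schur_class S \<longleftrightarrow> op_holomorphic_ball S \<and>
     (\<forall>(f::('d \<Rightarrow> complex) \<Rightarrow> 'u) M. in_Hkd_le f M \<longrightarrow> in_Hkd_le (\<lambda>l. S l (f l)) M)"

text \<open>\<open>A = col(A\<^sub>j)\<close>, \<open>B = col(B\<^sub>j)\<close> are given by the families \<open>A j\<close>, \<open>B j\<close>;
elements of \<open>\<X>\<^sup>d\<close> are functions \<open>'d \<Rightarrow> 'x\<close>.  \<open>Z(l)A = \<Sum>\<^sub>j l\<^sub>j A\<^sub>j\<close>.\<close>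

definition ZA :: "('d::finite \<Rightarrow> complex) \<Rightarrow> ('d \<Rightarrow> 'x::cinner_space \<Rightarrow> 'x) \<Rightarrow> 'x \<Rightarrow> 'x" where
  "ZA l A x = (\<Sum>j\<in>UNIV. l j *\<^sub>C A j x)"

definition ZB :: "('d::finite \<Rightarrow> complex) \<Rightarrow> ('d \<Rightarrow> 'u \<Rightarrow> 'x::cinner_space) \<Rightarrow> 'u \<Rightarrow> 'x" where
  "ZB l B u = (\<Sum>j\<in>UNIV. l j *\<^sub>C B j u)"

definition is_realization ::
  "(('d::finite \<Rightarrow> complex) \<Rightarrow> 'u::cinner_space \<Rightarrow> 'y::cinner_space)
   \<Rightarrow> ('d \<Rightarrow> 'x::cinner_space \<Rightarrow> 'x) \<Rightarrow> ('d \<Rightarrow> 'u \<Rightarrow> 'x) \<Rightarrow> ('x \<Rightarrow> 'y) \<Rightarrow> ('u \<Rightarrow> 'y) \<Rightarrow> bool" where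
  "is_realization S A B C D \<longleftrightarrow>
     (\<forall>j. bounded_clinear (A j) \<and> bounded_clinear (B j)) \<and>
     bounded_clinear C \<and> bounded_clinear D \<and>
     (\<forall>l\<in>ballB. bij (\<lambda>x. x - ZA l A x) \<and>
        (\<forall>u. S l u = D u + C (inv (\<lambda>x. x - ZA l A x) (ZB l B u))))"

definition commutative_ops :: "('d \<Rightarrow> 'x \<Rightarrow> 'x) \<Rightarrow> bool" where
  "commutative_ops A \<longleftrightarrow> (\<forall>i j. A i \<circ> A j = A j \<circ> A i)"

definition observable ::
  "('d::finite \<Rightarrow> 'x::cinner_space \<Rightarrow> 'x) \<Rightarrow> ('x \<Rightarrow> 'y::cinner_space) \<Rightarrow> bool" where
  "observable A C \<longleftrightarrow>
     (\<forall>x. (\<forall>l\<in>ballB. C (inv (\<lambda>z. z - ZA l A z) x) = 0) \<longrightarrow> x = 0)"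

text \<open>Generators of \<open>\<D>\<close>: \<open>Z(\<zeta>)\<^sup>*(I - A\<^sup>*Z(\<zeta>)\<^sup>*)\<^sup>-\<^sup>1C\<^sup>*y\<close>, where
\<open>Z(\<zeta>)\<^sup>*x = (cnj \<zeta>\<^sub>j x)\<^sub>j\<close> and \<open>A\<^sup>*h = \<Sum>\<^sub>j A\<^sub>j\<^sup>* h\<^sub>j\<close>.\<close>
definition Dgen ::
  "('d::finite \<Rightarrow> 'x::cinner_space \<Rightarrow> 'x) \<Rightarrow> ('x \<Rightarrow> 'y::cinner_space) \<Rightarrow> ('d \<Rightarrow> complex) \<Rightarrow> 'y \<Rightarrow> 'd \<Rightarrow> 'x" where
  "Dgen A C \<zeta> y =
     (let w = inv (\<lambda>x. x - (\<Sum>j\<in>UNIV. adjoint (A j) (cnj (\<zeta> j) *\<^sub>C x))) (adjoint C y)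
      in (\<lambda>j. cnj (\<zeta> j) *\<^sub>C w))"

text \<open>\<open>\<D>\<close>: closed linear span of the generators in \<open>\<X>\<^sup>d\<close>, whose norm is
\<open>\<parallel>h\<parallel> = (\<Sum>\<^sub>j \<parallel>h\<^sub>j\<parallel>\<^sup>2)\<^sup>1\<^sup>/\<^sup>2\<close>.\<close>
definition Dspace ::
  "('d::finite \<Rightarrow> 'x::cinner_space \<Rightarrow> 'x) \<Rightarrow> ('x \<Rightarrow> 'y::cinner_space) \<Rightarrow> ('d \<Rightarrow> 'x) set" where
  "Dspace A C = {h. \<forall>\<epsilon>>0. \<exists>(n::nat) (c::nat \<Rightarrow> complex) (\<zeta>::nat \<Rightarrow> ('d \<Rightarrow> complex)) (y::nat \<Rightarrow> 'y).
       (\<forall>i<n. \<zeta> i \<in> ballB) \<and>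
       sqrt (\<Sum>j\<in>UNIV. (norm (h j - (\<Sum>i<n. c i *\<^sub>C Dgen A C (\<zeta> i) (y i) j)))\<^sup>2) < \<epsilon>}"

text \<open>Weakly coisometric: the connecting operator
\<open>\<bold>U(x,u) = ((A\<^sub>jx + B\<^sub>ju)\<^sub>j, Cx + Du)\<close> is a contraction, and
\<open>\<bold>U\<^sup>*(h,y) = (\<Sum>\<^sub>j A\<^sub>j\<^sup>*h\<^sub>j + C\<^sup>*y, \<Sum>\<^sub>j B\<^sub>j\<^sup>*h\<^sub>j + D\<^sup>*y)\<close> is isometric on \<open>\<D> \<oplus> \<Y>\<close>.\<close>
definition weakly_coisometric ::
  "('d::finite \<Rightarrow> 'x::cinner_space \<Rightarrow> 'x) \<Rightarrow> ('d \<Rightarrow> 'u::cinner_space \<Rightarrow> 'x) \<Rightarrow> ('x \<Rightarrow> 'y::cinner_space)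
   \<Rightarrow> ('u \<Rightarrow> 'y) \<Rightarrow> bool" where
  "weakly_coisometric A B C D \<longleftrightarrow>
     (\<forall>x u. (\<Sum>j\<in>UNIV. (norm (A j x + B j u))\<^sup>2) + (norm (C x + D u))\<^sup>2 \<le> (norm x)\<^sup>2 + (norm u)\<^sup>2) \<and>
     (\<forall>h\<in>Dspace A C. \<forall>y.
        (norm ((\<Sum>j\<in>UNIV. adjoint (A j) (h j)) + adjoint C y))\<^sup>2
        + (norm ((\<Sum>j\<in>UNIV. adjoint (B j) (h j)) + adjoint D y))\<^sup>2
        = (\<Sum>j\<in>UNIV. (norm (h j))\<^sup>2) + (norm y)\<^sup>2)"

end

theory Submission
  imports Defs
begin

text \<open>
  Write R(l) = (I - Z(l)A)^-1 and k(l,y) = (I - A^* Z(l)^*)^-1 C^* y, so that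
  <x, k(l,y)> = <C R(l) x, y>.  The isometry of the adjoint connecting operator on combinations
  of two generators of D, polarized, gives
  (1 - <l2,l1>) <k(l1,y1), k(l2,y2)> = <y1,y2> - <S(l1)^* y1, S(l2)^* y2>,
  which depends on S alone.  By observability both families k(l,y) are total, so there is a
  unitary U with <U x, k''(l,y)> = <x, k'(l,y)>, that is C'' R''(l) U = C' R'(l) for all l in the
  ball; at l = 0 this is C'' U = C'.  Differentiating this identity in the coordinate l_j gives,
  by commutativity, C'' R''(l)^2 A''_j U = C' R'(l)^2 A'_j, and differentiating s C R(s l) at
  s = 1 gives C'' R''(l)^2 U A'_j = C' R'(l)^2 A'_j.  Hence C'' R''(l)^2 (A''_j U - U A'_j) = 0
  for all l; integrating along rays from the origin and using observability once more yields
  A''_j U = U A'_j.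
\<close>

context cinner_space
begin

lemma cscale_zero_right [simp]: "c *\<^sub>C 0 = 0"
proof -
  have "c *\<^sub>C 0 + c *\<^sub>C 0 = c *\<^sub>C 0 + 0" by (simp flip: cscale_add_right)
  then show ?thesis by (rule add_left_imp_eq)
qed

lemma cscale_zero_left [simp]: "0 *\<^sub>C x = 0"
proof -
  have "0 *\<^sub>C x + 0 *\<^sub>C x = 0 *\<^sub>C x + 0" by (simp flip: cscale_add_left)
  then show ?thesis by (rule add_left_imp_eq)
qed

lemma cscale_diff_left: "(a - b) *\<^sub>C x = a *\<^sub>C x - b *\<^sub>C x"
  using cscale_add_left [of "a - b" b x] by simp

lemma cscale_diff_right: "c *\<^sub>C (x - y) = c *\<^sub>C x - c *\<^sub>C y"
  using cscale_add_right [of c "x - y" y] by simp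

lemma cscale_sum_right: "c *\<^sub>C (\<Sum>i\<in>I. f i) = (\<Sum>i\<in>I. c *\<^sub>C f i)"
  by (induction I rule: infinite_finite_induct) (auto simp: cscale_add_right)

lemma cinner_add_right: "cinner x (y + z) = cinner x y + cinner x z"
  by (subst (1 2 3) cinner_commute) (simp add: cinner_add_left)

lemma cinner_cscale_right: "cinner x (c *\<^sub>C y) = cnj c * cinner x y"
  by (subst (1 2) cinner_commute) (simp add: cinner_cscale_left)

lemma cinner_zero_left [simp]: "cinner 0 y = 0"
  using cinner_cscale_left [of 0 0 y] by simp

lemma cinner_zero_right [simp]: "cinner x 0 = 0"
  using cinner_cscale_right [of x 0 0] by simp

lemma cinner_diff_left: "cinner (x - y) z = cinner x z - cinner y z"
  using cinner_add_left [of "x - y" y z] by simp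

lemma cinner_diff_right: "cinner x (y - z) = cinner x y - cinner x z"
  using cinner_add_right [of x "y - z" z] by simp

lemma cinner_sum_left: "cinner (\<Sum>i\<in>I. f i) y = (\<Sum>i\<in>I. cinner (f i) y)"
  by (induction I rule: infinite_finite_induct) (auto simp: cinner_add_left)

lemma cinner_sum_right: "cinner x (\<Sum>i\<in>I. f i) = (\<Sum>i\<in>I. cinner x (f i))"
  by (induction I rule: infinite_finite_induct) (auto simp: cinner_add_right)

lemma cinner_self_eq_zero [simp]: "cinner x x = 0 \<longleftrightarrow> x = 0"
  by (simp add: cinner_self_norm)

lemma power2_norm_eq_cinner: "(norm x)\<^sup>2 = Re (cinner x x)"
  by (simp add: cinner_self_norm)

lemma cinner_ext_left: "(\<And>z. cinner x z = cinner y z) \<Longrightarrow> x = y"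
  using cinner_self_eq_zero [of "x - y"] by (simp add: cinner_diff_left)

lemma cinner_ext_right: "(\<And>z. cinner z x = cinner z y) \<Longrightarrow> x = y"
  using cinner_self_eq_zero [of "x - y"] by (simp add: cinner_diff_right)

lemma norm_cscale: "norm (c *\<^sub>C x) = cmod c * norm x"
proof -
  have "cinner (c *\<^sub>C x) (c *\<^sub>C x) = (c * cnj c) * cinner x x"
    by (simp add: cinner_cscale_left cinner_cscale_right)
  also have "c * cnj c = complex_of_real ((cmod c)\<^sup>2)"
    by (rule complex_norm_square [symmetric])
  finally have "complex_of_real ((norm (c *\<^sub>C x))\<^sup>2) = complex_of_real ((cmod c * norm x)\<^sup>2)"
    by (simp only: cinner_self_norm power_mult_distrib of_real_mult)
  then show ?thesis by (simp only: of_real_eq_iff) (simp add: power2_eq_iff_nonneg)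
qed

lemma power2_norm_add:
  "(norm (x + y))\<^sup>2 = (norm x)\<^sup>2 + (norm y)\<^sup>2 + 2 * Re (cinner x y)"
  using cinner_commute [of y x]
  by (simp add: power2_norm_eq_cinner cinner_add_left cinner_add_right)

lemma power2_norm_diff:
  "(norm (x - y))\<^sup>2 = (norm x)\<^sup>2 + (norm y)\<^sup>2 - 2 * Re (cinner x y)"
  using cinner_commute [of y x]
  by (simp add: power2_norm_eq_cinner cinner_diff_left cinner_diff_right)

lemma power2_norm_cscale_add:
  "(norm (a *\<^sub>C x + b *\<^sub>C y))\<^sup>2
     = (cmod a)\<^sup>2 * (norm x)\<^sup>2 + (cmod b)\<^sup>2 * (norm y)\<^sup>2 + 2 * Re (a * cnj b * cinner x y)"
  by (simp add: power2_norm_add norm_cscale power_mult_distrib cinner_cscale_left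
      cinner_cscale_right ac_simps)

end

lemma power2_norm_diff_cscale:
  fixes x z :: "'a::cinner_space"
  assumes "z \<noteq> 0"
  shows "(norm (x - (cinner x z / (norm z)\<^sup>2) *\<^sub>C z))\<^sup>2
           = (norm x)\<^sup>2 - (cmod (cinner x z))\<^sup>2 / (norm z)\<^sup>2"
proof -
  define t where "t = cinner x z / (norm z)\<^sup>2"
  have "(norm (x - t *\<^sub>C z))\<^sup>2 = (norm x)\<^sup>2 + (cmod t)\<^sup>2 * (norm z)\<^sup>2 - 2 * Re (cnj t * cinner x z)"
    by (simp only: power2_norm_diff norm_cscale cinner_cscale_right power_mult_distrib)
  moreover have "Re (cnj t * cinner x z) = (cmod (cinner x z))\<^sup>2 / (norm z)\<^sup>2"
    by (simp add: t_def mult.commute complex_mult_cnj cmod_power2 flip: of_real_power)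
  moreover have "(cmod t)\<^sup>2 * (norm z)\<^sup>2 = (cmod (cinner x z))\<^sup>2 / (norm z)\<^sup>2"
    using assms by (simp add: t_def norm_divide norm_power field_simps)
  ultimately show ?thesis unfolding t_def [symmetric] by linarith
qed

lemma Cauchy_Schwarz_cinner:
  fixes x y :: "'a::cinner_space"
  shows "cmod (cinner x y) \<le> norm x * norm y"
proof (cases "y = 0")
  case False
  have "0 \<le> (norm x)\<^sup>2 - (cmod (cinner x y))\<^sup>2 / (norm y)\<^sup>2"
    by (metis False power2_norm_diff_cscale zero_le_power2)
  then have "(cmod (cinner x y))\<^sup>2 \<le> (norm x * norm y)\<^sup>2"
    using False by (simp add: field_simps power_mult_distrib)
  then show ?thesis by (simp add: power2_le_iff_abs_le)
qed simp

lemma bounded_linear_cinner_left: "bounded_linear (\<lambda>x::'a::cinner_space. cinner x v)"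
proof (rule bounded_linear_intro)
  show "cinner (r *\<^sub>R x) v = r *\<^sub>R cinner x v" for r x
    by (simp flip: cscale_of_real add: cinner_cscale_left scaleR_conv_of_real)
  show "norm (cinner x v) \<le> norm x * norm v" for x
    by (rule Cauchy_Schwarz_cinner)
qed (rule cinner_add_left)

lemma bounded_linear_cscale: "bounded_linear (\<lambda>x::'a::cinner_space. c *\<^sub>C x)"
proof (rule bounded_linear_intro)
  show "c *\<^sub>C (r *\<^sub>R x) = r *\<^sub>R (c *\<^sub>C x)" for r x
    by (simp flip: cscale_of_real add: cscale_cscale mult.commute)
  show "norm (c *\<^sub>C x) \<le> norm x * cmod c" for x
    by (simp add: norm_cscale mult.commute)
qed (rule cscale_add_right)

lemmas tendsto_cinner_left = bounded_linear.tendsto [OF bounded_linear_cinner_left]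
lemmas tendsto_cscale = bounded_linear.tendsto [OF bounded_linear_cscale]

section \<open>Bounded operators, orthogonal projection and adjoints\<close>

lemma bounded_clinear_add: "bounded_clinear T \<Longrightarrow> T (x + y) = T x + T y"
  unfolding bounded_clinear_def by blast

lemma bounded_clinear_cscale: "bounded_clinear T \<Longrightarrow> T (c *\<^sub>C x) = c *\<^sub>C T x"
  unfolding bounded_clinear_def by blast

lemma bounded_clinear_zero: "bounded_clinear T \<Longrightarrow> T 0 = 0"
  using bounded_clinear_cscale [of T 0 0] by simp

lemma bounded_clinear_diff: "bounded_clinear T \<Longrightarrow> T (x - y) = T x - T y"
  by (metis add_diff_cancel bounded_clinear_add diff_add_cancel)

lemma bounded_clinear_sum: "bounded_clinear T \<Longrightarrow> T (\<Sum>i\<in>I. f i) = (\<Sum>i\<in>I. T (f i))"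
  by (induction I rule: infinite_finite_induct) (auto simp: bounded_clinear_add bounded_clinear_zero)

lemma bounded_clinear_pos_bound:
  assumes "bounded_clinear T"
  shows "\<exists>K>0. \<forall>x. norm (T x) \<le> norm x * K"
proof -
  obtain K where K: "\<And>x. norm (T x) \<le> norm x * K"
    using assms unfolding bounded_clinear_def by blast
  have "norm (T x) \<le> norm x * max K 1" for x
    using K [of x] mult_left_mono [OF max.cobounded1 [of K 1] norm_ge_zero [of x]] by linarith
  then show ?thesis
    by (intro exI [of _ "max K 1"]) auto
qed

lemma bounded_clinear_imp_bounded_linear:
  assumes "bounded_clinear T"
  shows "bounded_linear T"
proof -
  obtain K where "\<And>x. norm (T x) \<le> norm x * K"
    using assms unfolding bounded_clinear_def by blast
  then show ?thesis
    using assms unfolding bounded_clinear_def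
    by (intro bounded_linear_intro [where K = K]) (auto simp flip: cscale_of_real)
qed

lemma bounded_clinearI:
  assumes "\<And>x y. T (x + y) = T x + T y" and "\<And>c x. T (c *\<^sub>C x) = c *\<^sub>C T x"
    and "\<And>x. norm (T x) \<le> norm x * K"
  shows "bounded_clinear T"
  unfolding bounded_clinear_def using assms by blast

definition csubspace :: "'a::cinner_space set \<Rightarrow> bool" where
  "csubspace M \<longleftrightarrow> 0 \<in> M \<and> (\<forall>x\<in>M. \<forall>y\<in>M. x + y \<in> M) \<and> (\<forall>c. \<forall>x\<in>M. c *\<^sub>C x \<in> M)"

lemma csubspace_imp_convex: "csubspace M \<Longrightarrow> convex M"
  unfolding csubspace_def convex_def by (simp flip: cscale_of_real)

lemma csubspace_closure:
  fixes S :: "'a::cinner_space set"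
  assumes "csubspace S"
  shows "csubspace (closure S)"
  unfolding csubspace_def
proof (intro conjI ballI allI)
  show "0 \<in> closure S"
    using assms closure_subset unfolding csubspace_def by blast
  fix x y c
  assume "x \<in> closure S" "y \<in> closure S"
  then obtain xs ys where "\<And>n. xs n \<in> S" "xs \<longlonglongrightarrow> x" "\<And>n. ys n \<in> S" "ys \<longlonglongrightarrow> y"
    unfolding closure_sequential by blast
  with assms show "x + y \<in> closure S"
    unfolding closure_sequential csubspace_def
    by (auto intro!: exI [of _ "\<lambda>n. xs n + ys n"] tendsto_add)
  from assms \<open>\<And>n. xs n \<in> S\<close> \<open>xs \<longlonglongrightarrow> x\<close> show "c *\<^sub>C x \<in> closure S"
    unfolding closure_sequential csubspace_def
    by (auto intro!: exI [of _ "\<lambda>n. c *\<^sub>C xs n"] tendsto_cscale)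
qed

lemma Cauchy_if_norm_diff_le:
  fixes f :: "nat \<Rightarrow> 'a::real_normed_vector"
  assumes "g \<longlonglongrightarrow> 0" and "\<And>i j. norm (f i - f j) \<le> g i + g j"
  shows "Cauchy f"
proof (rule metric_CauchyI)
  fix e :: real
  assume "0 < e"
  then obtain N where N: "\<And>n. n \<ge> N \<Longrightarrow> g n < e / 2"
    using order_tendstoD(2) [OF assms(1), of "e / 2"] by (auto simp: eventually_sequentially)
  have "dist (f m) (f n) < e" if "m \<ge> N" "n \<ge> N" for m n
    using assms(2) [of m n] N [OF that(1)] N [OF that(2)] by (simp add: dist_norm)
  then show "\<exists>N. \<forall>m\<ge>N. \<forall>n\<ge>N. dist (f m) (f n) < e" by blast
qed

lemma power2_norm_diff_midpoint:
  fixes a b x :: "'a::cinner_space"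
  shows "(norm (a - b))\<^sup>2
           = 2 * (norm (x - a))\<^sup>2 + 2 * (norm (x - b))\<^sup>2 - 4 * (norm (x - (1/2) *\<^sub>R (a + b)))\<^sup>2"
proof -
  have "(x - a) + (x - b) = 2 *\<^sub>R (x - (1/2) *\<^sub>R (a + b))"
    by (simp add: algebra_simps scaleR_2)
  moreover have "(x - b) - (x - a) = a - b"
    by simp
  ultimately show ?thesis
    using power2_norm_add [of "x - a" "x - b"] power2_norm_diff [of "x - b" "x - a"]
      cinner_commute [of "x - a" "x - b"]
    by (simp add: power_mult_distrib)
qed

lemma Cauchy_minimizing_sequence:
  fixes M :: "'a::cinner_space set"
  assumes "convex M" and d_le: "\<And>m. m \<in> M \<Longrightarrow> d \<le> norm (x - m)" and "0 \<le> d"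
    and ms: "\<And>n. ms n \<in> M" "\<And>n. norm (x - ms n) < d + inverse (Suc n)"
  shows "Cauchy ms"
proof (rule Cauchy_if_norm_diff_le)
  define e where "e n = (d + inverse (Suc n))\<^sup>2 - d\<^sup>2" for n
  have e_nonneg: "0 \<le> e n" for n
    using \<open>0 \<le> d\<close> by (simp add: e_def power_mono)
  have "(\<lambda>n. (d + inverse (Suc n))\<^sup>2) \<longlonglongrightarrow> (d + 0)\<^sup>2"
    by (intro tendsto_intros LIMSEQ_inverse_real_of_nat)
  then have "e \<longlonglongrightarrow> 0"
    unfolding e_def using tendsto_diff [OF _ tendsto_const [of "d\<^sup>2"]] by fastforce
  then show "(\<lambda>n. sqrt (2 * e n)) \<longlonglongrightarrow> 0"
    using tendsto_real_sqrt [OF tendsto_mult_right_zero [of e sequentially 2]] by simp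
  have sq: "(norm (x - ms n))\<^sup>2 \<le> d\<^sup>2 + e n" for n
    using ms(2) [of n] by (simp add: e_def power_mono)
  fix i j
  have "d\<^sup>2 \<le> (norm (x - (1/2) *\<^sub>R (ms i + ms j)))\<^sup>2"
    using d_le [OF convexD [OF assms(1) ms(1) ms(1), of "1/2" "1/2"]] \<open>0 \<le> d\<close>
    by (simp add: power_mono scaleR_add_right)
  then have "(norm (ms i - ms j))\<^sup>2 \<le> 2 * e i + 2 * e j"
    using power2_norm_diff_midpoint [of "ms i" "ms j" x] sq [of i] sq [of j] by linarith
  then have "norm (ms i - ms j) \<le> sqrt (2 * e i + 2 * e j)"
    using real_le_rsqrt by blast
  also have "\<dots> \<le> sqrt (2 * e i) + sqrt (2 * e j)"
    by (rule sqrt_add_le_add_sqrt) (simp_all add: e_nonneg)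
  finally show "norm (ms i - ms j) \<le> sqrt (2 * e i) + sqrt (2 * e j)" .
qed

lemma closest_point_exists_hilbert:
  fixes M :: "'a::chilbert set"
  assumes "closed M" and "convex M" and "M \<noteq> {}"
  shows "\<exists>m\<in>M. \<forall>z\<in>M. norm (x - m) \<le> norm (x - z)"
proof -
  define d where "d = (INF m\<in>M. norm (x - m))"
  have bdd: "bdd_below ((\<lambda>m. norm (x - m)) ` M)"
    by (rule bdd_belowI2 [of _ 0]) simp
  have d_le: "d \<le> norm (x - m)" if "m \<in> M" for m
    unfolding d_def using bdd that by (rule cINF_lower)
  have "0 \<le> d"
    unfolding d_def using assms(3) by (rule cINF_greatest) simp
  have "\<exists>m\<in>M. norm (x - m) < d + inverse (Suc n)" for n
    using cINF_less_iff [OF assms(3) bdd, of "d + inverse (Suc n)"] by (simp add: d_def)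
  then obtain ms where ms: "\<And>n. ms n \<in> M" "\<And>n. norm (x - ms n) < d + inverse (Suc n)"
    by metis
  then have "Cauchy ms"
    using Cauchy_minimizing_sequence [OF assms(2) d_le \<open>0 \<le> d\<close>] by blast
  then obtain m where m: "ms \<longlonglongrightarrow> m"
    using Cauchy_convergent convergent_def by blast
  have "m \<in> M"
    using closed_sequentially [OF assms(1)] ms(1) m by blast
  moreover have "norm (x - m) \<le> d"
  proof (rule LIMSEQ_le)
    show "(\<lambda>n. norm (x - ms n)) \<longlonglongrightarrow> norm (x - m)"
      by (intro tendsto_intros m)
    show "(\<lambda>n. d + inverse (Suc n)) \<longlonglongrightarrow> d"
      using tendsto_add [OF tendsto_const LIMSEQ_inverse_real_of_nat] by simp
  qed (use ms(2) less_imp_le in blast)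
  ultimately show ?thesis
    using d_le order_trans by blast
qed

lemma closest_point_orthogonal:
  fixes M :: "'a::cinner_space set"
  assumes "csubspace M" and "m \<in> M" and closest: "\<And>z. z \<in> M \<Longrightarrow> norm (x - m) \<le> norm (x - z)"
    and "z \<in> M"
  shows "cinner (x - m) z = 0"
proof (rule ccontr)
  assume ne: "cinner (x - m) z \<noteq> 0"
  then have "z \<noteq> 0" by auto
  define t where "t = cinner (x - m) z / (norm z)\<^sup>2"
  have "m + t *\<^sub>C z \<in> M"
    using assms unfolding csubspace_def by blast
  then have "(norm (x - m))\<^sup>2 \<le> (norm ((x - m) - t *\<^sub>C z))\<^sup>2"
    using closest by (simp add: power_mono diff_diff_eq)
  also have "\<dots> = (norm (x - m))\<^sup>2 - (cmod (cinner (x - m) z))\<^sup>2 / (norm z)\<^sup>2"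
    unfolding t_def by (rule power2_norm_diff_cscale [OF \<open>z \<noteq> 0\<close>])
  finally have "(cmod (cinner (x - m) z))\<^sup>2 / (norm z)\<^sup>2 \<le> 0"
    by simp
  moreover have "0 < (cmod (cinner (x - m) z))\<^sup>2 / (norm z)\<^sup>2"
    using ne \<open>z \<noteq> 0\<close> by simp
  ultimately show False
    by linarith
qed

lemma orthogonal_projection_exists:
  fixes M :: "'a::chilbert set"
  assumes "closed M" and "csubspace M"
  shows "\<exists>m\<in>M. \<forall>z\<in>M. cinner (x - m) z = 0"
proof -
  have "M \<noteq> {}"
    using assms(2) unfolding csubspace_def by blast
  then obtain m where "m \<in> M" "\<forall>z\<in>M. norm (x - m) \<le> norm (x - z)"
    using closest_point_exists_hilbert assms csubspace_imp_convex by blast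
  then show ?thesis
    using closest_point_orthogonal [OF assms(2)] by blast
qed

lemma closure_eq_UNIV_if_orthogonal_complement_trivial:
  fixes S :: "'a::chilbert set"
  assumes "csubspace S" and "\<And>x. (\<And>s. s \<in> S \<Longrightarrow> cinner x s = 0) \<Longrightarrow> x = 0"
  shows "closure S = UNIV"
proof -
  have "x \<in> closure S" for x
  proof -
    obtain m where "m \<in> closure S" "\<forall>z\<in>closure S. cinner (x - m) z = 0"
      using orthogonal_projection_exists [OF closed_closure csubspace_closure [OF assms(1)]] by blast
    moreover from this have "x - m = 0"
      using assms(2) closure_subset by blast
    ultimately show ?thesis by simp
  qed
  then show ?thesis by blast
qed

lemma riesz_representation:
  fixes f :: "'a::chilbert \<Rightarrow> complex"
  assumes add: "\<And>x y. f (x + y) = f x + f y" and hom: "\<And>c x. f (c *\<^sub>C x) = c * f x"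
    and bound: "\<And>x. cmod (f x) \<le> norm x * K"
  shows "\<exists>z. \<forall>x. f x = cinner x z"
proof (cases "\<forall>x. f x = 0")
  case False
  then obtain x0 where "f x0 \<noteq> 0" by blast
  have f_diff: "f (x - y) = f x - f y" for x y
    using add [of "x - y" y] by simp
  have "bounded_linear f"
    by (rule bounded_linear_intro [where K = K])
      (simp_all add: add bound hom scaleR_conv_of_real flip: cscale_of_real)
  then have "closed {x. f x = 0}"
    by (intro closed_Collect_eq continuous_on_const linear_continuous_on)
  moreover have "csubspace {x. f x = 0}"
    unfolding csubspace_def using hom [of 0 0] add hom by auto
  ultimately obtain m where "f m = 0" and perp: "\<And>z. f z = 0 \<Longrightarrow> cinner (x0 - m) z = 0"
    using orthogonal_projection_exists by blast
  define p where "p = x0 - m"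
  have "f p \<noteq> 0"
    using \<open>f x0 \<noteq> 0\<close> \<open>f m = 0\<close> by (simp add: p_def f_diff)
  then have "p \<noteq> 0"
    using hom [of 0 0] by auto
  have "f x = cinner x ((cnj (f p) / (norm p)\<^sup>2) *\<^sub>C p)" for x
  proof -
    have "f (x - (f x / f p) *\<^sub>C p) = 0"
      using \<open>f p \<noteq> 0\<close> by (simp add: f_diff hom)
    then have "cinner (x - (f x / f p) *\<^sub>C p) p = 0"
      using perp cinner_commute unfolding p_def by (metis complex_cnj_zero)
    then have "cinner x p = f x / f p * (norm p)\<^sup>2"
      by (simp add: cinner_diff_left cinner_cscale_left cinner_self_norm)
    then show ?thesis
      using \<open>f p \<noteq> 0\<close> \<open>p \<noteq> 0\<close> by (simp add: cinner_cscale_right)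
  qed
  then show ?thesis by blast
qed (intro exI [of _ 0], simp)

lemma adjoint_exists:
  fixes T :: "'a::chilbert \<Rightarrow> 'b::cinner_space"
  assumes "bounded_clinear T"
  shows "\<exists>T'. \<forall>x y. cinner (T x) y = cinner x (T' y)"
proof -
  obtain K where K: "\<And>x. norm (T x) \<le> norm x * K"
    using assms unfolding bounded_clinear_def by blast
  have "\<exists>z. \<forall>x. cinner (T x) y = cinner x z" for y
  proof (rule riesz_representation)
    show "cmod (cinner (T x) y) \<le> norm x * (K * norm y)" for x
    proof -
      have "cmod (cinner (T x) y) \<le> norm (T x) * norm y"
        by (rule Cauchy_Schwarz_cinner)
      also have "\<dots> \<le> norm x * K * norm y"
        using K [of x] by (simp add: mult_right_mono)
      finally show ?thesis
        by (simp add: mult.assoc)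
    qed
  qed (simp_all add: assms bounded_clinear_add bounded_clinear_cscale cinner_add_left
      cinner_cscale_left)
  then show ?thesis by metis
qed

lemma cinner_adjoint:
  fixes T :: "'a::chilbert \<Rightarrow> 'b::cinner_space"
  assumes "bounded_clinear T"
  shows "cinner (T x) y = cinner x (adjoint T y)"
  using someI_ex [OF adjoint_exists [OF assms]] unfolding adjoint_def by blast

lemma adjoint_eqI:
  assumes "\<And>x y. cinner (T x) y = cinner x (T' y)"
  shows "adjoint T = T'"
proof -
  have "\<forall>x y. cinner (T x) y = cinner x (adjoint T y)"
    unfolding adjoint_def by (rule someI [of _ T']) (use assms in blast)
  then show ?thesis
    by (intro ext cinner_ext_right) (simp add: assms)
qed

lemma adjoint_add:
  fixes T :: "'a::chilbert \<Rightarrow> 'b::cinner_space"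
  assumes "bounded_clinear T"
  shows "adjoint T (a + b) = adjoint T a + adjoint T b"
  by (rule cinner_ext_right) (simp add: cinner_add_right flip: cinner_adjoint [OF assms])

lemma adjoint_cscale:
  fixes T :: "'a::chilbert \<Rightarrow> 'b::cinner_space"
  assumes "bounded_clinear T"
  shows "adjoint T (c *\<^sub>C a) = c *\<^sub>C adjoint T a"
  by (rule cinner_ext_right) (simp add: cinner_cscale_right flip: cinner_adjoint [OF assms])

section \<open>A unitary operator from equal Gram matrices\<close>

definition lin_comb :: "('p \<Rightarrow> 'a::cinner_space) \<Rightarrow> 'p set \<Rightarrow> ('p \<Rightarrow> complex) \<Rightarrow> 'a" where
  "lin_comb w F c = (\<Sum>p\<in>F. c p *\<^sub>C w p)"

definition lin_combs :: "('p \<Rightarrow> 'a::cinner_space) \<Rightarrow> 'p set \<Rightarrow> 'a set" where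
  "lin_combs w P = {lin_comb w F c | F c. finite F \<and> F \<subseteq> P}"

lemma lin_comb_empty [simp]: "lin_comb w {} c = 0"
  by (simp add: lin_comb_def)

lemma lin_comb_singleton [simp]: "lin_comb w {q} (\<lambda>_. 1) = w q"
  by (simp add: lin_comb_def cscale_one)

lemma lin_comb_restrict:
  assumes "finite G" and "F \<subseteq> G"
  shows "lin_comb w F c = lin_comb w G (\<lambda>p. if p \<in> F then c p else 0)"
proof -
  have "lin_comb w G (\<lambda>p. if p \<in> F then c p else 0) = (\<Sum>p\<in>G. if p \<in> F then c p *\<^sub>C w p else 0)"
    unfolding lin_comb_def by (intro sum.cong) auto
  also have "\<dots> = lin_comb w F c"
    unfolding lin_comb_def using sum.inter_restrict [OF assms(1), of "\<lambda>p. c p *\<^sub>C w p" F] assms(2)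
    by (simp add: Int_absorb1)
  finally show ?thesis ..
qed

lemma csubspace_lin_combs: "csubspace (lin_combs w P)"
  unfolding csubspace_def
proof (intro conjI ballI allI)
  show "0 \<in> lin_combs w P"
    unfolding lin_combs_def by (intro CollectI exI [of _ "{}"]) simp
  fix x y c
  assume "x \<in> lin_combs w P" "y \<in> lin_combs w P"
  then obtain F a G b where FG: "finite F" "F \<subseteq> P" "finite G" "G \<subseteq> P"
    and xy: "x = lin_comb w F a" "y = lin_comb w G b"
    unfolding lin_combs_def by blast
  have "x + y = lin_comb w (F \<union> G) (\<lambda>p. (if p \<in> F then a p else 0) + (if p \<in> G then b p else 0))"
    using lin_comb_restrict [of "F \<union> G" F w a] lin_comb_restrict [of "F \<union> G" G w b] FG
    unfolding xy by (simp add: lin_comb_def cscale_add_left sum.distrib)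
  with FG show "x + y \<in> lin_combs w P"
    unfolding lin_combs_def by blast
  have "c *\<^sub>C x = lin_comb w F (\<lambda>p. c * a p)"
    unfolding xy lin_comb_def by (simp add: cscale_sum_right cscale_cscale)
  with FG show "c *\<^sub>C x \<in> lin_combs w P"
    unfolding lin_combs_def by blast
qed

lemma lin_comb_diff:
  assumes "finite F" and "finite G"
  shows "lin_comb w F c - lin_comb w G d
           = lin_comb w (F \<union> G) (\<lambda>p. (if p \<in> F then c p else 0) - (if p \<in> G then d p else 0))"
  using lin_comb_restrict [of "F \<union> G" F w c] lin_comb_restrict [of "F \<union> G" G w d] assms
  by (simp add: lin_comb_def cscale_diff_left sum_subtractf)

lemma cinner_lin_comb:
  "cinner (lin_comb w F c) (lin_comb w G d)
     = (\<Sum>p\<in>F. \<Sum>q\<in>G. c p * cnj (d q) * cinner (w p) (w q))"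
proof -
  have "cinner (lin_comb w F c) (lin_comb w G d) = (\<Sum>p\<in>F. c p * cinner (w p) (lin_comb w G d))"
    unfolding lin_comb_def [of w F] by (simp add: cinner_sum_left cinner_cscale_left)
  also have "\<dots> = (\<Sum>p\<in>F. \<Sum>q\<in>G. c p * cnj (d q) * cinner (w p) (w q))"
    unfolding lin_comb_def by (simp add: cinner_sum_right cinner_cscale_right sum_distrib_left mult.assoc)
  finally show ?thesis .
qed

lemma cinner_lin_comb_same_gram:
  assumes gram: "\<And>p q. p \<in> P \<Longrightarrow> q \<in> P \<Longrightarrow> cinner (w1 p) (w1 q) = cinner (w2 p) (w2 q)"
    and "F \<subseteq> P" and "G \<subseteq> P"
  shows "cinner (lin_comb w2 F c) (lin_comb w2 G d) = cinner (lin_comb w1 F c) (lin_comb w1 G d)"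
  unfolding cinner_lin_comb using assms(2,3) by (intro sum.cong refl) (metis gram subsetD)

lemma norm_lin_comb_same_gram:
  assumes "\<And>p q. p \<in> P \<Longrightarrow> q \<in> P \<Longrightarrow> cinner (w1 p) (w1 q) = cinner (w2 p) (w2 q)"
    and "F \<subseteq> P"
  shows "norm (lin_comb w2 F c) = norm (lin_comb w1 F c)"
proof -
  have "complex_of_real ((norm (lin_comb w2 F c))\<^sup>2) = complex_of_real ((norm (lin_comb w1 F c))\<^sup>2)"
    using cinner_lin_comb_same_gram [OF assms(1,2,2), where c = c and d = c] by (simp only: cinner_self_norm)
  then show ?thesis
    by (simp only: of_real_eq_iff) (simp add: power2_eq_iff_nonneg)
qed

lemma closure_lin_combs_eq_UNIV:
  fixes w :: "'p \<Rightarrow> 'a::chilbert"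
  assumes "\<And>x. (\<forall>p\<in>P. cinner x (w p) = 0) \<Longrightarrow> x = 0"
  shows "closure (lin_combs w P) = UNIV"
proof (rule closure_eq_UNIV_if_orthogonal_complement_trivial [OF csubspace_lin_combs])
  fix x
  assume "\<And>s. s \<in> lin_combs w P \<Longrightarrow> cinner x s = 0"
  moreover have "w p \<in> lin_combs w P" if "p \<in> P" for p
    unfolding lin_combs_def using that by (intro CollectI exI [of _ "{p}"] exI [of _ "\<lambda>_. 1"]) simp
  ultimately show "x = 0"
    using assms by blast
qed

lemma same_gram_extension:
  fixes w1 :: "'p \<Rightarrow> 'a::chilbert" and w2 :: "'p \<Rightarrow> 'b::chilbert"
  assumes gram: "\<And>p q. p \<in> P \<Longrightarrow> q \<in> P \<Longrightarrow> cinner (w1 p) (w1 q) = cinner (w2 p) (w2 q)"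
    and total: "\<And>x. (\<forall>p\<in>P. cinner x (w1 p) = 0) \<Longrightarrow> x = 0"
  shows "\<exists>x2. (\<forall>q\<in>P. cinner x2 (w2 q) = cinner x (w1 q)) \<and> norm x2 = norm x"
proof -
  obtain a where "\<And>n. a n \<in> lin_combs w1 P" and a_lim: "a \<longlonglongrightarrow> x"
    using closure_lin_combs_eq_UNIV [OF total] closure_sequential by blast
  then have "\<forall>n. \<exists>F c. finite F \<and> F \<subseteq> P \<and> a n = lin_comb w1 F c"
    unfolding lin_combs_def by blast
  then obtain F c where F: "\<And>n. finite (F n)" "\<And>n. F n \<subseteq> P"
    and a_eq: "\<And>n. a n = lin_comb w1 (F n) (c n)"
    by metis
  define b where "b n = lin_comb w2 (F n) (c n)" for n
  have "dist (b i) (b j) = dist (a i) (a j)" for i j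
    using norm_lin_comb_same_gram [OF gram, where F = "F i \<union> F j"] F unfolding dist_norm a_eq b_def
    by (simp add: lin_comb_diff)
  moreover have "Cauchy a"
    using a_lim by (rule LIMSEQ_imp_Cauchy)
  ultimately have "Cauchy b"
    unfolding Cauchy_def by simp
  then obtain x2 where b_lim: "b \<longlonglongrightarrow> x2"
    using Cauchy_convergent convergent_def by blast
  have "cinner x2 (w2 q) = cinner x (w1 q)" if "q \<in> P" for q
  proof (rule LIMSEQ_unique [OF tendsto_cinner_left [OF b_lim]])
    have "cinner (b n) (w2 q) = cinner (a n) (w1 q)" for n
      using cinner_lin_comb_same_gram [OF gram F(2) [of n], where G = "{q}" and c = "c n" and d = "\<lambda>_. 1"] that
      by (simp add: a_eq b_def)
    then show "(\<lambda>n. cinner (b n) (w2 q)) \<longlonglongrightarrow> cinner x (w1 q)"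
      using tendsto_cinner_left [OF a_lim] by simp
  qed
  moreover have "norm x2 = norm x"
  proof (rule LIMSEQ_unique [OF tendsto_norm [OF b_lim]])
    show "(\<lambda>n. norm (b n)) \<longlonglongrightarrow> norm x"
      using tendsto_norm [OF a_lim] norm_lin_comb_same_gram [OF gram F(2)] by (simp add: a_eq b_def)
  qed
  ultimately show ?thesis by blast
qed

lemma unitaryI:
  assumes "bounded_clinear U" and "\<And>x. norm (U x) = norm x" and "surj U"
  shows "unitary U"
proof -
  have "inj U"
  proof (rule injI)
    fix x y
    assume "U x = U y"
    then have "norm (x - y) = 0"
      using assms(2) [of "x - y"] bounded_clinear_diff [OF assms(1)] by simp
    then show "x = y" by simp
  qed
  then show ?thesis
    using assms unfolding unitary_def bij_def by blast
qed

lemma unitary_from_same_gram: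
  fixes w1 :: "'p \<Rightarrow> 'a::chilbert" and w2 :: "'p \<Rightarrow> 'b::chilbert"
  assumes gram: "\<And>p q. p \<in> P \<Longrightarrow> q \<in> P \<Longrightarrow> cinner (w1 p) (w1 q) = cinner (w2 p) (w2 q)"
    and total1: "\<And>x. (\<forall>p\<in>P. cinner x (w1 p) = 0) \<Longrightarrow> x = 0"
    and total2: "\<And>x. (\<forall>p\<in>P. cinner x (w2 p) = 0) \<Longrightarrow> x = 0"
  shows "\<exists>U. unitary U \<and> (\<forall>x. \<forall>p\<in>P. cinner (U x) (w2 p) = cinner x (w1 p))"
proof -
  define U where
    "U x = (SOME x2. (\<forall>q\<in>P. cinner x2 (w2 q) = cinner x (w1 q)) \<and> norm x2 = norm x)" for x
  define V where
    "V x = (SOME x1. (\<forall>q\<in>P. cinner x1 (w1 q) = cinner x (w2 q)) \<and> norm x1 = norm x)" for x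
  have gram': "cinner (w2 p) (w2 q) = cinner (w1 p) (w1 q)" if "p \<in> P" "q \<in> P" for p q
    using gram [OF that] ..
  have U_spec: "(\<forall>q\<in>P. cinner (U x) (w2 q) = cinner x (w1 q)) \<and> norm (U x) = norm x" for x
    unfolding U_def by (rule someI_ex [OF same_gram_extension [OF gram total1]])
  then have U: "\<forall>q\<in>P. cinner (U x) (w2 q) = cinner x (w1 q)" "norm (U x) = norm x" for x
    by simp_all
  have V: "\<forall>q\<in>P. cinner (V x) (w1 q) = cinner x (w2 q)" for x
    unfolding V_def by (rule conjunct1 [OF someI_ex [OF same_gram_extension [OF gram' total2]]])
  have eq2: "x = y" if "\<forall>q\<in>P. cinner x (w2 q) = cinner y (w2 q)" for x y
    using total2 [of "x - y"] that by (simp add: cinner_diff_left)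
  have "bounded_clinear U"
  proof (rule bounded_clinearI [where K = 1])
    show "U (x + y) = U x + U y" for x y
      by (rule eq2) (simp add: U cinner_add_left)
    show "U (c *\<^sub>C x) = c *\<^sub>C U x" for c x
      by (rule eq2) (simp add: U cinner_cscale_left)
  qed (simp add: U)
  moreover have "U (V z) = z" for z
    by (rule eq2) (simp add: U V)
  then have "surj U"
    by (metis surjI)
  ultimately have "unitary U"
    using U(2) unitaryI by blast
  then show ?thesis
    using U(1) by blast
qed

section \<open>Derivative of the inverse of an operator pencil\<close>

definition pencil :: "('a::cinner_space \<Rightarrow> 'a) \<Rightarrow> ('a \<Rightarrow> 'a) \<Rightarrow> complex \<Rightarrow> 'a \<Rightarrow> 'a" where
  "pencil P Q t x = P x - t *\<^sub>C Q x"

lemma bounded_clinear_pencil: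
  assumes "bounded_clinear P" and "bounded_clinear Q"
  shows "bounded_clinear (pencil P Q t)"
proof -
  obtain KP KQ where "\<And>x. norm (P x) \<le> norm x * KP" "\<And>x. norm (Q x) \<le> norm x * KQ"
    using assms unfolding bounded_clinear_def by blast
  then have bound: "norm (pencil P Q t x) \<le> norm x * (KP + cmod t * KQ)" for x
    unfolding pencil_def using norm_triangle_ineq4 [of "P x" "t *\<^sub>C Q x"]
    by (smt (verit, best) distrib_left mult.left_commute mult_left_mono norm_cscale norm_ge_zero)
  show ?thesis
    by (rule bounded_clinearI [OF _ _ bound])
      (simp_all add: pencil_def assms bounded_clinear_add bounded_clinear_cscale cscale_add_right
        cscale_diff_right cscale_cscale mult.commute)
qed

lemma pencil_inv_diff:
  assumes "bounded_clinear P" and "bounded_clinear Q"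
    and bij: "bij (pencil P Q t)" and bij0: "bij (pencil P Q \<tau>)"
  shows "inv (pencil P Q t) u - inv (pencil P Q \<tau>) u
           = (t - \<tau>) *\<^sub>C inv (pencil P Q t) (Q (inv (pencil P Q \<tau>) u))"
proof -
  let ?T = "pencil P Q t" and ?R = "inv (pencil P Q t)" and ?R' = "inv (pencil P Q \<tau>)"
  have lin: "bounded_clinear ?T"
    using assms(1,2) by (rule bounded_clinear_pencil)
  have "?T (?R' u) = pencil P Q \<tau> (?R' u) - (t - \<tau>) *\<^sub>C Q (?R' u)"
    by (simp add: pencil_def cscale_diff_left algebra_simps)
  also have "\<dots> = u - (t - \<tau>) *\<^sub>C Q (?R' u)"
    using bij0 by (simp add: bij_is_surj surj_f_inv_f)
  finally have T_R0: "?T (?R' u) = u - (t - \<tau>) *\<^sub>C Q (?R' u)" .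
  have T_R: "?T (?R x) = x" for x
    using bij by (simp add: bij_is_surj surj_f_inv_f)
  have "?T (?R u - ?R' u) = (t - \<tau>) *\<^sub>C Q (?R' u)"
    by (simp add: bounded_clinear_diff [OF lin] T_R T_R0)
  also have "\<dots> = ?T ((t - \<tau>) *\<^sub>C ?R (Q (?R' u)))"
    by (simp add: bounded_clinear_cscale [OF lin] T_R)
  finally show ?thesis
    using bij by (simp add: bij_is_inj inj_eq)
qed

lemma eventually_norm_pencil_inv_le:
  assumes "bounded_clinear P" and "bounded_clinear Q"
    and bij: "eventually (\<lambda>t. bij (pencil P Q t)) (at \<tau>)"
    and "m > 0" and below: "\<And>x. m * norm x \<le> norm (pencil P Q \<tau> x)"
  shows "eventually (\<lambda>t. \<forall>u. norm (inv (pencil P Q t) u) \<le> 2 / m * norm u) (at \<tau>)"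
proof -
  obtain K where "K > 0" and K: "\<And>x. norm (Q x) \<le> norm x * K"
    using bounded_clinear_pos_bound [OF assms(2)] by blast
  have "((\<lambda>t. cmod (t - \<tau>) * K) \<longlongrightarrow> cmod (\<tau> - \<tau>) * K) (at \<tau>)"
    by (intro tendsto_intros)
  then have "eventually (\<lambda>t. cmod (t - \<tau>) * K < m / 2) (at \<tau>)"
    using \<open>m > 0\<close> by (intro order_tendstoD(2)) auto
  with bij show ?thesis
  proof eventually_elim
    case (elim t)
    show ?case
    proof
      fix u
      define x where "x = inv (pencil P Q t) u"
      have "pencil P Q t x = u"
        using elim(1) by (simp add: x_def bij_is_surj surj_f_inv_f)
      moreover have "pencil P Q \<tau> x = pencil P Q t x + (t - \<tau>) *\<^sub>C Q x"
        by (simp add: pencil_def cscale_diff_left algebra_simps)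
      ultimately have "m * norm x \<le> norm u + cmod (t - \<tau>) * norm (Q x)"
        using below [of x] norm_triangle_ineq [of u "(t - \<tau>) *\<^sub>C Q x"] by (simp add: norm_cscale)
      also have "\<dots> \<le> norm u + (cmod (t - \<tau>) * K) * norm x"
        using mult_left_mono [OF K [of x] norm_ge_zero [of "t - \<tau>"]] by (simp add: ac_simps)
      also have "\<dots> \<le> norm u + m / 2 * norm x"
        using mult_right_mono [OF less_imp_le [OF elim(2)] norm_ge_zero [of x]] by simp
      finally show "norm x \<le> 2 / m * norm u"
        using \<open>m > 0\<close> by (simp add: field_simps)
    qed
  qed
qed

lemma pencil_inv_tendsto:
  assumes "bounded_clinear P" and "bounded_clinear Q"
    and bij: "eventually (\<lambda>t. bij (pencil P Q t)) (at \<tau>)" and bij0: "bij (pencil P Q \<tau>)"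
    and "m > 0" and "\<And>x. m * norm x \<le> norm (pencil P Q \<tau> x)"
  shows "((\<lambda>t. inv (pencil P Q t) u) \<longlongrightarrow> inv (pencil P Q \<tau>) u) (at \<tau>)"
proof -
  define z where "z = Q (inv (pencil P Q \<tau>) u)"
  have "eventually (\<lambda>t. norm (inv (pencil P Q t) u - inv (pencil P Q \<tau>) u)
                          \<le> cmod (t - \<tau>) * (2 / m * norm z)) (at \<tau>)"
    using bij eventually_norm_pencil_inv_le [OF assms(1,2) bij assms(5,6)]
  proof eventually_elim
    case (elim t)
    then have "norm (inv (pencil P Q t) z) \<le> 2 / m * norm z"
      by blast
    then show ?case
      unfolding pencil_inv_diff [OF assms(1,2) elim(1) bij0] norm_cscale z_def [symmetric]
      by (rule mult_left_mono) simp
  qed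
  moreover have "((\<lambda>t. cmod (t - \<tau>) * (2 / m * norm z)) \<longlongrightarrow> cmod (\<tau> - \<tau>) * (2 / m * norm z)) (at \<tau>)"
    by (intro tendsto_intros)
  then have "((\<lambda>t. cmod (t - \<tau>) * (2 / m * norm z)) \<longlongrightarrow> 0) (at \<tau>)"
    by (simp only: diff_self norm_zero mult_zero_left)
  ultimately have "((\<lambda>t. inv (pencil P Q t) u - inv (pencil P Q \<tau>) u) \<longlongrightarrow> 0) (at \<tau>)"
    by (rule Lim_null_comparison)
  then show ?thesis
    by (rule LIM_zero_cancel)
qed

lemma has_field_derivative_pencil_inv:
  assumes "bounded_clinear P" and "bounded_clinear Q" and "bounded_clinear C"
    and bij: "eventually (\<lambda>t. bij (pencil P Q t)) (at \<tau>)" and bij0: "bij (pencil P Q \<tau>)"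
    and "m > 0" and "\<And>x. m * norm x \<le> norm (pencil P Q \<tau> x)"
  shows "((\<lambda>t. cinner (C (inv (pencil P Q t) v)) y) has_field_derivative
           cinner (C (inv (pencil P Q \<tau>) (Q (inv (pencil P Q \<tau>) v)))) y) (at \<tau>)"
proof -
  define z where "z = Q (inv (pencil P Q \<tau>) v)"
  have "((\<lambda>t. inv (pencil P Q t) z) \<longlongrightarrow> inv (pencil P Q \<tau>) z) (at \<tau>)"
    by (rule pencil_inv_tendsto [OF assms(1,2,4-7)])
  then have "((\<lambda>t. C (inv (pencil P Q t) z)) \<longlongrightarrow> C (inv (pencil P Q \<tau>) z)) (at \<tau>)"
    by (rule bounded_linear.tendsto [OF bounded_clinear_imp_bounded_linear [OF assms(3)]])
  then have "((\<lambda>t. cinner (C (inv (pencil P Q t) z)) y) \<longlongrightarrow> cinner (C (inv (pencil P Q \<tau>) z)) y) (at \<tau>)"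
    by (rule tendsto_cinner_left)
  moreover have "eventually (\<lambda>t. cinner (C (inv (pencil P Q t) z)) y
      = (cinner (C (inv (pencil P Q t) v)) y - cinner (C (inv (pencil P Q \<tau>) v)) y) / (t - \<tau>)) (at \<tau>)"
    using bij eventually_neq_at_within [of \<tau>]
  proof eventually_elim
    case (elim t)
    have "cinner (C (inv (pencil P Q t) v)) y - cinner (C (inv (pencil P Q \<tau>) v)) y
        = cinner (C (inv (pencil P Q t) v - inv (pencil P Q \<tau>) v)) y"
      by (simp add: bounded_clinear_diff [OF assms(3)] cinner_diff_left)
    also have "\<dots> = (t - \<tau>) * cinner (C (inv (pencil P Q t) z)) y"
      by (simp add: pencil_inv_diff [OF assms(1,2) elim(1) bij0] bounded_clinear_cscale [OF assms(3)]
          cinner_cscale_left z_def)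
    finally show ?case
      using elim(2) by (simp add: eq_divide_eq mult.commute)
  qed
  ultimately show ?thesis
    unfolding has_field_derivative_iff z_def by (rule Lim_transform_eventually)
qed

section \<open>The unit ball and a polarization identity\<close>

definition sq_norm_vec :: "('d::finite \<Rightarrow> complex) \<Rightarrow> real" where
  "sq_norm_vec l = (\<Sum>j\<in>UNIV. (cmod (l j))\<^sup>2)"

lemma mem_ballB_iff: "l \<in> ballB \<longleftrightarrow> sq_norm_vec l < 1"
  by (simp add: ballB_def sq_norm_vec_def)

lemma sq_norm_vec_nonneg: "0 \<le> sq_norm_vec l"
  unfolding sq_norm_vec_def by (intro sum_nonneg) simp

lemma zero_in_ballB: "(\<lambda>_. 0) \<in> ballB"
  by (simp add: mem_ballB_iff sq_norm_vec_def)

lemma scaled_in_ballB: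
  assumes "l \<in> ballB" and "cmod s \<le> 1"
  shows "(\<lambda>i. s * l i) \<in> ballB"
proof -
  have "sq_norm_vec (\<lambda>i. s * l i) = (cmod s)\<^sup>2 * sq_norm_vec l"
    by (simp add: sq_norm_vec_def norm_mult power_mult_distrib sum_distrib_left)
  also have "\<dots> \<le> sq_norm_vec l"
    using assms(2) sq_norm_vec_nonneg [of l] by (simp add: mult_left_le_one_le power_le_one)
  finally show ?thesis
    using assms(1) by (simp add: mem_ballB_iff)
qed

lemma open_preimage_ballB:
  fixes g :: "complex \<Rightarrow> 'd::finite \<Rightarrow> complex"
  assumes "\<And>i. continuous_on UNIV (\<lambda>t. g t i)"
  shows "open {t. g t \<in> ballB}"
proof -
  have "continuous_on UNIV (\<lambda>t. sq_norm_vec (g t))"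
    unfolding sq_norm_vec_def by (intro continuous_intros assms)
  then have "open {t. sq_norm_vec (g t) < 1}"
    by (intro open_Collect_less continuous_intros)
  then show ?thesis
    by (simp add: mem_ballB_iff)
qed

lemma sum_cmod_mult_le:
  fixes a :: "'d::finite \<Rightarrow> complex"
  assumes "\<And>j. 0 \<le> f j"
  shows "(\<Sum>j\<in>UNIV. cmod (a j) * f j) \<le> sqrt (sq_norm_vec a) * sqrt (\<Sum>j\<in>UNIV. (f j)\<^sup>2)"
  using L2_set_mult_ineq [of "\<lambda>j. cmod (a j)" f UNIV] assms
  by (simp add: L2_set_def sq_norm_vec_def)

lemma cmod_cdot_less_1:
  assumes "l \<in> ballB" and "m \<in> ballB"
  shows "cmod (cdot l m) < 1"
proof -
  have "cmod (cdot l m) \<le> (\<Sum>j\<in>UNIV. cmod (m j) * cmod (l j))"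
    unfolding cdot_def by (rule order_trans [OF norm_sum]) (simp add: norm_mult mult.commute)
  also have "\<dots> \<le> sqrt (sq_norm_vec m) * sqrt (sq_norm_vec l)"
    using sum_cmod_mult_le [of "\<lambda>j. cmod (l j)" m] by (simp add: sq_norm_vec_def)
  also have "\<dots> \<le> sqrt (sq_norm_vec l)"
    using assms(2) by (intro mult_left_le_one_le) (simp_all add: mem_ballB_iff sq_norm_vec_nonneg)
  also have "\<dots> < 1"
    using assms(1) by (simp add: mem_ballB_iff)
  finally show ?thesis .
qed

lemma hermitian_form_eq_zero:
  fixes X1 X2 :: real and Z :: complex
  assumes form: "\<And>c1 c2. (cmod c1)\<^sup>2 * X1 + (cmod c2)\<^sup>2 * X2 + 2 * Re (c1 * cnj c2 * Z) = 0"
  shows "Z = 0"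
proof -
  have "X1 = 0" "X2 = 0"
    using form [of 1 0] form [of 0 1] by simp_all
  then have "Re Z = 0" "Im Z = 0"
    using form [of 1 1] form [of 1 "- \<i>"] by simp_all
  then show ?thesis
    by (simp add: complex_eq_iff)
qed

lemma sum_power2_norm_cscale_add:
  fixes a1 a2 :: "'a::cinner_space" and l1 l2 :: "'d::finite \<Rightarrow> complex"
  shows "(\<Sum>j\<in>UNIV. (norm (c1 *\<^sub>C (cnj (l1 j) *\<^sub>C a1) + c2 *\<^sub>C (cnj (l2 j) *\<^sub>C a2)))\<^sup>2)
    = (cmod c1)\<^sup>2 * (norm a1)\<^sup>2 * sq_norm_vec l1 + (cmod c2)\<^sup>2 * (norm a2)\<^sup>2 * sq_norm_vec l2
      + 2 * Re (c1 * cnj c2 * cinner a1 a2 * cdot l2 l1)"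
proof -
  have "(norm (c1 *\<^sub>C (cnj (l1 j) *\<^sub>C a1) + c2 *\<^sub>C (cnj (l2 j) *\<^sub>C a2)))\<^sup>2
      = (cmod c1)\<^sup>2 * (norm a1)\<^sup>2 * (cmod (l1 j))\<^sup>2 + (cmod c2)\<^sup>2 * (norm a2)\<^sup>2 * (cmod (l2 j))\<^sup>2
        + 2 * Re (c1 * cnj c2 * cinner a1 a2 * (l2 j * cnj (l1 j)))" for j
  proof -
    have "c1 * cnj (l1 j) * cnj (c2 * cnj (l2 j)) = c1 * cnj c2 * (l2 j * cnj (l1 j))"
      by simp
    then show ?thesis
      using power2_norm_cscale_add [of "c1 * cnj (l1 j)" a1 "c2 * cnj (l2 j)" a2]
      by (simp add: cscale_cscale norm_mult power_mult_distrib ac_simps)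
  qed
  then show ?thesis
    unfolding sq_norm_vec_def cdot_def
    by (simp only: sum.distrib sum_distrib_left [symmetric] Re_sum [symmetric])
qed

lemma cinner_identity_from_norm_identity:
  fixes a1 a2 :: "'a::cinner_space" and b1 b2 :: "'b::cinner_space" and e1 e2 :: "'c::cinner_space"
    and l1 l2 :: "'d::finite \<Rightarrow> complex"
  assumes "\<And>c1 c2. (norm (c1 *\<^sub>C a1 + c2 *\<^sub>C a2))\<^sup>2 + (norm (c1 *\<^sub>C b1 + c2 *\<^sub>C b2))\<^sup>2
      = (\<Sum>j\<in>UNIV. (norm (c1 *\<^sub>C (cnj (l1 j) *\<^sub>C a1) + c2 *\<^sub>C (cnj (l2 j) *\<^sub>C a2)))\<^sup>2)
        + (norm (c1 *\<^sub>C e1 + c2 *\<^sub>C e2))\<^sup>2"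
  shows "(1 - cdot l2 l1) * cinner a1 a2 = cinner e1 e2 - cinner b1 b2"
proof -
  define Z where "Z = (1 - cdot l2 l1) * cinner a1 a2 + cinner b1 b2 - cinner e1 e2"
  have "(cmod c1)\<^sup>2 * ((norm a1)\<^sup>2 + (norm b1)\<^sup>2 - (norm a1)\<^sup>2 * sq_norm_vec l1 - (norm e1)\<^sup>2)
      + (cmod c2)\<^sup>2 * ((norm a2)\<^sup>2 + (norm b2)\<^sup>2 - (norm a2)\<^sup>2 * sq_norm_vec l2 - (norm e2)\<^sup>2)
      + 2 * Re (c1 * cnj c2 * Z) = 0" for c1 c2
  proof -
    have "Re (c1 * cnj c2 * Z) = Re (c1 * cnj c2 * cinner a1 a2) + Re (c1 * cnj c2 * cinner b1 b2)
        - Re (c1 * cnj c2 * cinner a1 a2 * cdot l2 l1) - Re (c1 * cnj c2 * cinner e1 e2)"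
      by (simp add: Z_def algebra_simps)
    then show ?thesis
      using assms [of c1 c2, unfolded sum_power2_norm_cscale_add, unfolded power2_norm_cscale_add]
      by (simp only: ring_distribs mult.assoc)
  qed
  then have "Z = 0"
    by (rule hermitian_form_eq_zero)
  then show ?thesis
    by (simp add: Z_def algebra_simps)
qed

section \<open>Weakly coisometric realizations\<close>

lemma bounded_clinear_ZA:
  assumes "\<And>j. bounded_clinear (A j)"
  shows "bounded_clinear (ZA l A)"
proof -
  obtain K where K: "\<And>j x. norm (A j x) \<le> norm x * K j"
    using assms unfolding bounded_clinear_def by metis
  have "norm (ZA l A x) \<le> norm x * (\<Sum>j\<in>UNIV. cmod (l j) * K j)" for x
  proof -
    have "norm (ZA l A x) \<le> (\<Sum>j\<in>UNIV. cmod (l j) * norm (A j x))"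
      unfolding ZA_def by (rule order_trans [OF norm_sum]) (simp add: norm_cscale)
    also have "\<dots> \<le> (\<Sum>j\<in>UNIV. cmod (l j) * (norm x * K j))"
      by (intro sum_mono mult_left_mono K) simp
    finally show ?thesis
      by (simp add: sum_distrib_left ac_simps)
  qed
  then show ?thesis
    by (rule bounded_clinearI [rotated 2])
      (simp_all add: ZA_def assms bounded_clinear_add bounded_clinear_cscale cscale_add_right
        sum.distrib cscale_sum_right cscale_cscale mult.commute)
qed

definition i_minus_ZA :: "('d::finite \<Rightarrow> complex) \<Rightarrow> ('d \<Rightarrow> 'x::cinner_space \<Rightarrow> 'x) \<Rightarrow> 'x \<Rightarrow> 'x" where
  "i_minus_ZA l A x = x - ZA l A x"

definition resolvent :: "('d::finite \<Rightarrow> complex) \<Rightarrow> ('d \<Rightarrow> 'x::cinner_space \<Rightarrow> 'x) \<Rightarrow> 'x \<Rightarrow> 'x" where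
  "resolvent l A = inv (i_minus_ZA l A)"

definition i_minus_adj_ZA ::
  "('d::finite \<Rightarrow> complex) \<Rightarrow> ('d \<Rightarrow> 'x::cinner_space \<Rightarrow> 'x) \<Rightarrow> 'x \<Rightarrow> 'x" where
  "i_minus_adj_ZA l A x = x - (\<Sum>j\<in>UNIV. adjoint (A j) (cnj (l j) *\<^sub>C x))"

definition kernel_vec ::
  "('d::finite \<Rightarrow> 'x::cinner_space \<Rightarrow> 'x) \<Rightarrow> ('x \<Rightarrow> 'y::cinner_space) \<Rightarrow> ('d \<Rightarrow> complex) \<Rightarrow> 'y \<Rightarrow> 'x" where
  "kernel_vec A C l y = inv (i_minus_adj_ZA l A) (adjoint C y)"

lemma resolvent_zero: "resolvent (\<lambda>_. 0) A x = x"
proof -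
  have "i_minus_ZA (\<lambda>_. 0) A = id"
    by (simp add: fun_eq_iff i_minus_ZA_def ZA_def)
  then show ?thesis
    by (simp add: resolvent_def)
qed

lemma ZA_scale: "ZA (\<lambda>i. s * l i) A x = s *\<^sub>C ZA l A x"
  by (simp add: ZA_def cscale_sum_right cscale_cscale)

lemma i_minus_ZA_line: "i_minus_ZA (\<lambda>i. l i + t * m i) A = pencil (i_minus_ZA l A) (ZA m A) t"
  by (simp add: fun_eq_iff i_minus_ZA_def pencil_def ZA_def cscale_add_left cscale_sum_right
      cscale_cscale sum.distrib)

lemma Dgen_eq_kernel_vec: "Dgen A C l y = (\<lambda>j. cnj (l j) *\<^sub>C kernel_vec A C l y)"
  by (simp add: Dgen_def kernel_vec_def i_minus_adj_ZA_def [abs_def])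

lemma observable_iff_resolvent:
  "observable A C \<longleftrightarrow> (\<forall>x. (\<forall>l\<in>ballB. C (resolvent l A x) = 0) \<longrightarrow> x = 0)"
  by (simp add: observable_def resolvent_def i_minus_ZA_def [abs_def])

lemma Dgen_pair_in_Dspace:
  assumes "l1 \<in> ballB" and "l2 \<in> ballB"
  shows "(\<lambda>j. c1 *\<^sub>C Dgen A C l1 y1 j + c2 *\<^sub>C Dgen A C l2 y2 j) \<in> Dspace A C"
proof -
  define c where "c i = (if i = 0 then c1 else c2)" for i :: nat
  define \<zeta> where "\<zeta> i = (if i = 0 then l1 else l2)" for i :: nat
  define y where "y i = (if i = 0 then y1 else y2)" for i :: nat
  have "(\<Sum>i<2. c i *\<^sub>C Dgen A C (\<zeta> i) (y i) j) = c1 *\<^sub>C Dgen A C l1 y1 j + c2 *\<^sub>C Dgen A C l2 y2 j" for j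
    by (simp add: numeral_2_eq_2 c_def \<zeta>_def y_def)
  moreover have "\<forall>i<2. \<zeta> i \<in> ballB"
    using assms by (simp add: \<zeta>_def)
  ultimately show ?thesis
    unfolding Dspace_def by (intro CollectI allI impI exI [of _ 2] exI [of _ c] exI [of _ \<zeta>] exI [of _ y]) simp
qed

locale wc_realization =
  fixes S :: "('d::finite \<Rightarrow> complex) \<Rightarrow> 'u::chilbert \<Rightarrow> 'y::chilbert"
    and A :: "'d \<Rightarrow> 'x::chilbert \<Rightarrow> 'x" and B :: "'d \<Rightarrow> 'u \<Rightarrow> 'x" and C :: "'x \<Rightarrow> 'y"
    and D :: "'u \<Rightarrow> 'y"
  assumes realization: "is_realization S A B C D"
    and coisometric: "weakly_coisometric A B C D"
begin

lemma bounded_clinear_A: "bounded_clinear (A j)"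
  and bounded_clinear_B: "bounded_clinear (B j)"
  and bounded_clinear_C: "bounded_clinear C"
  and bounded_clinear_D: "bounded_clinear D"
  using realization unfolding is_realization_def by blast+

lemma bounded_clinear_ZA_A: "bounded_clinear (ZA l A)"
  by (rule bounded_clinear_ZA) (rule bounded_clinear_A)

lemma bij_i_minus_ZA: "l \<in> ballB \<Longrightarrow> bij (i_minus_ZA l A)"
  using realization unfolding is_realization_def i_minus_ZA_def [abs_def] by blast

lemma S_eq: "l \<in> ballB \<Longrightarrow> S l u = D u + C (resolvent l A (ZB l B u))"
  using realization unfolding is_realization_def resolvent_def i_minus_ZA_def [abs_def] by blast

lemma i_minus_ZA_resolvent: "l \<in> ballB \<Longrightarrow> i_minus_ZA l A (resolvent l A u) = u"
  unfolding resolvent_def by (simp add: bij_i_minus_ZA bij_is_surj surj_f_inv_f)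

lemma resolvent_i_minus_ZA: "l \<in> ballB \<Longrightarrow> resolvent l A (i_minus_ZA l A u) = u"
  unfolding resolvent_def by (simp add: bij_i_minus_ZA bij_is_inj)

lemma bounded_clinear_i_minus_ZA: "bounded_clinear (i_minus_ZA l A)"
proof -
  have "i_minus_ZA l A = pencil (\<lambda>x. x) (ZA l A) 1"
    by (simp add: fun_eq_iff i_minus_ZA_def pencil_def cscale_one)
  moreover have "bounded_clinear (\<lambda>x::'x. x)"
    by (rule bounded_clinearI [where K = 1]) simp_all
  ultimately show ?thesis
    by (simp add: bounded_clinear_pencil bounded_clinear_ZA_A)
qed

lemma sum_power2_norm_A_le: "(\<Sum>j\<in>UNIV. (norm (A j x))\<^sup>2) \<le> (norm x)\<^sup>2"
proof -
  have "(\<Sum>j\<in>UNIV. (norm (A j x + B j 0))\<^sup>2) + (norm (C x + D 0))\<^sup>2 \<le> (norm x)\<^sup>2 + (norm (0::'u))\<^sup>2"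
    using coisometric unfolding weakly_coisometric_def by blast
  then show ?thesis
    by (simp add: bounded_clinear_zero [OF bounded_clinear_B] bounded_clinear_zero [OF bounded_clinear_D])
      (smt (verit) zero_le_power2)
qed

lemma norm_i_minus_ZA_ge: "(1 - sqrt (sq_norm_vec l)) * norm x \<le> norm (i_minus_ZA l A x)"
proof -
  have "norm (ZA l A x) \<le> (\<Sum>j\<in>UNIV. cmod (l j) * norm (A j x))"
    unfolding ZA_def by (rule order_trans [OF norm_sum]) (simp add: norm_cscale)
  also have "\<dots> \<le> sqrt (sq_norm_vec l) * sqrt (\<Sum>j\<in>UNIV. (norm (A j x))\<^sup>2)"
    by (rule sum_cmod_mult_le) simp
  also have "\<dots> \<le> sqrt (sq_norm_vec l) * norm x"
    using real_sqrt_le_mono [OF sum_power2_norm_A_le [of x]]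
    by (intro mult_left_mono) (simp_all add: sq_norm_vec_nonneg)
  finally have "norm (ZA l A x) \<le> sqrt (sq_norm_vec l) * norm x" .
  moreover have "norm x \<le> norm (i_minus_ZA l A x) + norm (ZA l A x)"
    unfolding i_minus_ZA_def using norm_triangle_ineq [of "x - ZA l A x" "ZA l A x"] by simp
  ultimately show ?thesis
    by (simp add: left_diff_distrib)
qed

lemma norm_resolvent_le:
  assumes "l \<in> ballB"
  shows "norm (resolvent l A u) \<le> norm u / (1 - sqrt (sq_norm_vec l))"
proof -
  have "0 < 1 - sqrt (sq_norm_vec l)"
    using assms by (simp add: mem_ballB_iff)
  moreover have "(1 - sqrt (sq_norm_vec l)) * norm (resolvent l A u) \<le> norm u"
    using norm_i_minus_ZA_ge [of l "resolvent l A u"] by (simp add: i_minus_ZA_resolvent assms)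
  ultimately show ?thesis
    by (simp add: field_simps)
qed

lemma bounded_clinear_resolvent:
  assumes "l \<in> ballB"
  shows "bounded_clinear (resolvent l A)"
proof (rule bounded_clinearI)
  note lin = bounded_clinear_i_minus_ZA [of l]
  show "resolvent l A (x + y) = resolvent l A x + resolvent l A y" for x y
    by (metis assms bounded_clinear_add [OF lin] i_minus_ZA_resolvent resolvent_i_minus_ZA)
  show "resolvent l A (c *\<^sub>C x) = c *\<^sub>C resolvent l A x" for c x
    by (metis assms bounded_clinear_cscale [OF lin] i_minus_ZA_resolvent resolvent_i_minus_ZA)
  show "norm (resolvent l A x) \<le> norm x * (1 / (1 - sqrt (sq_norm_vec l)))" for x
    using norm_resolvent_le [OF assms, of x] by simp
qed

lemma cinner_i_minus_ZA: "cinner (i_minus_ZA l A x) v = cinner x (i_minus_adj_ZA l A v)"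
  by (simp add: i_minus_ZA_def i_minus_adj_ZA_def ZA_def cinner_diff_left cinner_diff_right
      cinner_sum_left cinner_sum_right cinner_cscale_left cinner_cscale_right
      cinner_adjoint [OF bounded_clinear_A] adjoint_cscale [OF bounded_clinear_A])

lemma i_minus_adj_ZA_kernel_vec:
  assumes "l \<in> ballB"
  shows "i_minus_adj_ZA l A (kernel_vec A C l y) = adjoint C y"
proof -
  have "i_minus_adj_ZA l A (adjoint (resolvent l A) v) = v" for v
  proof (rule cinner_ext_right)
    fix x
    have "cinner x (i_minus_adj_ZA l A (adjoint (resolvent l A) v))
        = cinner (resolvent l A (i_minus_ZA l A x)) v"
      by (simp add: cinner_adjoint [OF bounded_clinear_resolvent [OF assms]] flip: cinner_i_minus_ZA)
    then show "cinner x (i_minus_adj_ZA l A (adjoint (resolvent l A) v)) = cinner x v"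
      by (simp add: resolvent_i_minus_ZA [OF assms])
  qed
  then have "surj (i_minus_adj_ZA l A)"
    by (metis surjI)
  then show ?thesis
    by (simp add: kernel_vec_def surj_f_inv_f)
qed

lemma cinner_kernel_vec:
  assumes "l \<in> ballB"
  shows "cinner x (kernel_vec A C l y) = cinner (C (resolvent l A x)) y"
proof -
  have "cinner x (kernel_vec A C l y) = cinner (i_minus_ZA l A (resolvent l A x)) (kernel_vec A C l y)"
    by (simp add: i_minus_ZA_resolvent [OF assms])
  also have "\<dots> = cinner (resolvent l A x) (adjoint C y)"
    by (simp add: cinner_i_minus_ZA i_minus_adj_ZA_kernel_vec [OF assms])
  also have "\<dots> = cinner (C (resolvent l A x)) y"
    by (simp add: cinner_adjoint [OF bounded_clinear_C])
  finally show ?thesis .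
qed

lemma kernel_vec_total:
  assumes "observable A C" and "\<forall>l\<in>ballB. \<forall>y. cinner x (kernel_vec A C l y) = 0"
  shows "x = 0"
proof -
  have "C (resolvent l A x) = 0" if "l \<in> ballB" for l
  proof -
    have "cinner (C (resolvent l A x)) (C (resolvent l A x)) = 0"
      using assms(2) that by (simp flip: cinner_kernel_vec [OF that])
    then show ?thesis by simp
  qed
  then show ?thesis
    using assms(1) unfolding observable_iff_resolvent by blast
qed

lemma adjoint_S:
  assumes "l \<in> ballB"
  shows "adjoint (S l) y = adjoint D y + (\<Sum>j\<in>UNIV. adjoint (B j) (cnj (l j) *\<^sub>C kernel_vec A C l y))"
proof (rule fun_cong [of _ _ y], rule adjoint_eqI)
  fix u y
  have "cinner (C (resolvent l A (ZB l B u))) y = cinner (ZB l B u) (kernel_vec A C l y)"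
    by (simp add: cinner_kernel_vec [OF assms])
  also have "\<dots> = (\<Sum>j\<in>UNIV. cinner u (adjoint (B j) (cnj (l j) *\<^sub>C kernel_vec A C l y)))"
    by (simp add: ZB_def cinner_sum_left cinner_cscale_left cinner_cscale_right
        flip: cinner_adjoint [OF bounded_clinear_B])
  finally show "cinner (S l u) y
      = cinner u (adjoint D y + (\<Sum>j\<in>UNIV. adjoint (B j) (cnj (l j) *\<^sub>C kernel_vec A C l y)))"
    by (simp add: S_eq [OF assms] cinner_add_left cinner_add_right cinner_sum_right
        cinner_adjoint [OF bounded_clinear_D])
qed

lemma norm_identity_kernel_vec_pair:
  fixes y1 y2 :: 'y
  assumes l1: "l1 \<in> ballB" and l2: "l2 \<in> ballB"
  defines "w1 \<equiv> kernel_vec A C l1 y1" and "w2 \<equiv> kernel_vec A C l2 y2"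
  shows "(norm (c1 *\<^sub>C w1 + c2 *\<^sub>C w2))\<^sup>2 + (norm (c1 *\<^sub>C adjoint (S l1) y1 + c2 *\<^sub>C adjoint (S l2) y2))\<^sup>2
      = (\<Sum>j\<in>UNIV. (norm (c1 *\<^sub>C (cnj (l1 j) *\<^sub>C w1) + c2 *\<^sub>C (cnj (l2 j) *\<^sub>C w2)))\<^sup>2)
        + (norm (c1 *\<^sub>C y1 + c2 *\<^sub>C y2))\<^sup>2"
proof -
  define h where "h j = c1 *\<^sub>C (cnj (l1 j) *\<^sub>C w1) + c2 *\<^sub>C (cnj (l2 j) *\<^sub>C w2)" for j
  define y where "y = c1 *\<^sub>C y1 + c2 *\<^sub>C y2"
  have "h \<in> Dspace A C"
    unfolding h_def w1_def w2_def using Dgen_pair_in_Dspace [OF l1 l2, of c1 A C y1 c2 y2]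
    by (simp add: Dgen_eq_kernel_vec)
  then have "(norm ((\<Sum>j\<in>UNIV. adjoint (A j) (h j)) + adjoint C y))\<^sup>2
        + (norm ((\<Sum>j\<in>UNIV. adjoint (B j) (h j)) + adjoint D y))\<^sup>2
      = (\<Sum>j\<in>UNIV. (norm (h j))\<^sup>2) + (norm y)\<^sup>2"
    using coisometric unfolding weakly_coisometric_def by blast
  moreover have "(\<Sum>j\<in>UNIV. adjoint (A j) (cnj (l j) *\<^sub>C kernel_vec A C l y')) = kernel_vec A C l y' - adjoint C y'"
    if "l \<in> ballB" for l y'
    using i_minus_adj_ZA_kernel_vec [OF that, of y'] by (simp add: i_minus_adj_ZA_def algebra_simps)
  then have "(\<Sum>j\<in>UNIV. adjoint (A j) (h j)) + adjoint C y = c1 *\<^sub>C w1 + c2 *\<^sub>C w2"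
    using l1 l2
    by (simp add: h_def y_def w1_def w2_def adjoint_add adjoint_cscale bounded_clinear_A bounded_clinear_C
        sum.distrib cscale_diff_right flip: cscale_sum_right)
  moreover have "(\<Sum>j\<in>UNIV. adjoint (B j) (h j)) + adjoint D y
      = c1 *\<^sub>C adjoint (S l1) y1 + c2 *\<^sub>C adjoint (S l2) y2"
    using l1 l2
    by (simp add: adjoint_S h_def y_def w1_def w2_def adjoint_add adjoint_cscale bounded_clinear_B
        bounded_clinear_D sum.distrib cscale_add_right algebra_simps flip: cscale_sum_right)
  ultimately show ?thesis
    by (simp add: h_def y_def)
qed

lemma cinner_kernel_vec_kernel_vec:
  assumes "l1 \<in> ballB" and "l2 \<in> ballB"
  shows "cinner (kernel_vec A C l1 y1) (kernel_vec A C l2 y2)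
           = (cinner y1 y2 - cinner (adjoint (S l1) y1) (adjoint (S l2) y2)) / (1 - cdot l2 l1)"
proof -
  have "(1 - cdot l2 l1) * cinner (kernel_vec A C l1 y1) (kernel_vec A C l2 y2)
      = cinner y1 y2 - cinner (adjoint (S l1) y1) (adjoint (S l2) y2)"
    by (rule cinner_identity_from_norm_identity) (rule norm_identity_kernel_vec_pair [OF assms])
  moreover have "1 - cdot l2 l1 \<noteq> 0"
    using cmod_cdot_less_1 [OF assms(2,1)] by auto
  ultimately show ?thesis
    by (simp add: field_simps)
qed

lemma has_field_derivative_resolvent_line:
  assumes "l \<in> ballB"
  shows "((\<lambda>t. cinner (C (resolvent (\<lambda>i. l i + t * m i) A x)) y) has_field_derivative
           cinner (C (resolvent l A (ZA m A (resolvent l A x)))) y) (at 0)"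
proof -
  have "open {t. (\<lambda>i. l i + t * m i) \<in> ballB}"
    by (rule open_preimage_ballB) (intro continuous_intros)
  moreover have "0 \<in> {t. (\<lambda>i. l i + t * m i) \<in> ballB}"
    using assms by simp
  ultimately have "eventually (\<lambda>t. t \<in> {t. (\<lambda>i. l i + t * m i) \<in> ballB}) (at 0)"
    by (rule eventually_at_in_open')
  then have bij: "eventually (\<lambda>t. bij (pencil (i_minus_ZA l A) (ZA m A) t)) (at 0)"
    by eventually_elim (simp add: bij_i_minus_ZA flip: i_minus_ZA_line)
  have at_0: "pencil (i_minus_ZA l A) (ZA m A) 0 = i_minus_ZA l A"
    by (simp add: fun_eq_iff pencil_def)
  have pos: "0 < 1 - sqrt (sq_norm_vec l)"
    using assms by (simp add: mem_ballB_iff)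
  have "((\<lambda>t. cinner (C (inv (pencil (i_minus_ZA l A) (ZA m A) t) x)) y) has_field_derivative
      cinner (C (inv (pencil (i_minus_ZA l A) (ZA m A) 0)
        (ZA m A (inv (pencil (i_minus_ZA l A) (ZA m A) 0) x)))) y) (at 0)"
    by (rule has_field_derivative_pencil_inv [OF bounded_clinear_i_minus_ZA bounded_clinear_ZA_A
          bounded_clinear_C bij _ pos]) (simp_all add: at_0 bij_i_minus_ZA [OF assms] norm_i_minus_ZA_ge)
  then show ?thesis
    by (simp add: resolvent_def i_minus_ZA_line at_0)
qed

lemma A_resolvent_commute:
  assumes "commutative_ops A" and "l \<in> ballB"
  shows "A j (resolvent l A x) = resolvent l A (A j x)"
proof -
  have "A j (A i z) = A i (A j z)" for i z
    using assms(1) unfolding commutative_ops_def by (metis comp_apply)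
  then have "A j (i_minus_ZA l A z) = i_minus_ZA l A (A j z)" for z
    by (simp add: i_minus_ZA_def ZA_def bounded_clinear_diff bounded_clinear_sum bounded_clinear_cscale
        bounded_clinear_A)
  then show ?thesis
    by (metis assms(2) i_minus_ZA_resolvent resolvent_i_minus_ZA)
qed

lemma has_field_derivative_resolvent_coordinate:
  assumes "commutative_ops A" and "l \<in> ballB"
  shows "((\<lambda>t. cinner (C (resolvent (\<lambda>i. l i + t * of_bool (i = j)) A x)) y) has_field_derivative
           cinner (C (resolvent l A (resolvent l A (A j x)))) y) (at 0)"
proof -
  have "ZA (\<lambda>i. of_bool (i = j)) A z = (\<Sum>i\<in>UNIV. if j = i then A i z else 0)" for z
    unfolding ZA_def by (intro sum.cong) (auto simp: cscale_one)
  then have "ZA (\<lambda>i. of_bool (i = j)) A z = A j z" for z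
    by simp
  then show ?thesis
    using has_field_derivative_resolvent_line [OF assms(2), of "\<lambda>i. of_bool (i = j)" x y]
    by (simp add: A_resolvent_commute [OF assms])
qed

lemma resolvent_resolvent_scaled:
  fixes s :: complex
  assumes "(\<lambda>i. s * l i) \<in> ballB"
  defines "R \<equiv> resolvent (\<lambda>i. s * l i) A"
  shows "R (R v) = R v + s *\<^sub>C R (ZA l A (R v))"
proof -
  note lin = bounded_clinear_i_minus_ZA [of "\<lambda>i. s * l i"]
  have "R v = v + s *\<^sub>C ZA l A (R v)"
    using i_minus_ZA_resolvent [OF assms(1), of v] by (simp add: R_def i_minus_ZA_def ZA_scale algebra_simps)
  then have "i_minus_ZA (\<lambda>i. s * l i) A (R v + s *\<^sub>C R (ZA l A (R v))) = R v"
    by (simp add: R_def bounded_clinear_add [OF lin] bounded_clinear_cscale [OF lin]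
        i_minus_ZA_resolvent [OF assms(1)])
  then show ?thesis
    by (metis R_def assms(1) resolvent_i_minus_ZA)
qed

lemma has_field_derivative_resolvent_radial:
  assumes "(\<lambda>i. s0 * l i) \<in> ballB"
  shows "((\<lambda>s. s * cinner (C (resolvent (\<lambda>i. s * l i) A v)) y) has_field_derivative
           cinner (C (resolvent (\<lambda>i. s0 * l i) A (resolvent (\<lambda>i. s0 * l i) A v))) y) (at s0)"
proof -
  define R where "R = resolvent (\<lambda>i. s0 * l i) A"
  have "((\<lambda>t. cinner (C (resolvent (\<lambda>i. s0 * l i + t * l i) A v)) y) has_field_derivative
      cinner (C (R (ZA l A (R v)))) y) (at (s0 + - s0))"
    unfolding R_def using has_field_derivative_resolvent_line [OF assms] by simp
  then have "((\<lambda>s. cinner (C (resolvent (\<lambda>i. s * l i) A v)) y) has_field_derivative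
      cinner (C (R (ZA l A (R v)))) y) (at s0)"
    unfolding DERIV_shift by (simp add: algebra_simps)
  from DERIV_mult [OF DERIV_ident this]
  show ?thesis
    using resolvent_resolvent_scaled [OF assms, of v]
    by (simp add: R_def bounded_clinear_add [OF bounded_clinear_C] bounded_clinear_cscale [OF bounded_clinear_C]
        cinner_add_left cinner_cscale_left mult.commute)
qed

lemma observable_resolvent_sq:
  assumes "observable A C" and sq: "\<And>l. l \<in> ballB \<Longrightarrow> C (resolvent l A (resolvent l A v)) = 0"
  shows "v = 0"
proof -
  have "C (resolvent l A v) = 0" if "l \<in> ballB" for l
  proof (rule cinner_ext_left)
    fix y
    define \<phi> where "\<phi> s = s * cinner (C (resolvent (\<lambda>i. s * l i) A v)) y" for s
    have "(\<phi> has_field_derivative 0) (at s within closed_segment 0 1)" if "s \<in> closed_segment 0 1" for s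
    proof -
      have "cmod s \<le> 1"
        using segment_bound1 [OF that] by simp
      with \<open>l \<in> ballB\<close> have sl: "(\<lambda>i. s * l i) \<in> ballB"
        by (rule scaled_in_ballB)
      have "(\<phi> has_field_derivative cinner (C (resolvent (\<lambda>i. s * l i) A (resolvent (\<lambda>i. s * l i) A v))) y) (at s)"
        unfolding \<phi>_def [abs_def] by (rule has_field_derivative_resolvent_radial [OF sl])
      then show ?thesis
        by (simp add: sq [OF sl] has_field_derivative_at_within)
    qed
    then obtain c where "\<forall>s\<in>closed_segment 0 1. \<phi> s = c"
      using has_field_derivative_zero_constant [OF convex_closed_segment] by blast
    then have "\<phi> 1 = \<phi> 0"
      by simp
    then show "cinner (C (resolvent l A v)) y = cinner 0 y"
      by (simp add: \<phi>_def)
  qed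
  then show ?thesis
    using assms(1) unfolding observable_iff_resolvent by blast
qed

end

lemma DERIV_unique_on_open:
  assumes "(f has_field_derivative a) (at z)" and "(g has_field_derivative b) (at z)"
    and "open S" and "z \<in> S" and "\<And>t. t \<in> S \<Longrightarrow> f t = g t"
  shows "a = b"
  using DERIV_unique [OF has_field_derivative_transform_within_open [OF assms(1,3,4,5)] assms(2)] .

lemma observability_operators_unitarily_equivalent:
  fixes S :: "('d::finite \<Rightarrow> complex) \<Rightarrow> 'u::chilbert \<Rightarrow> 'y::chilbert"
    and A1 :: "'d \<Rightarrow> 'x1::chilbert \<Rightarrow> 'x1" and C1 :: "'x1 \<Rightarrow> 'y"
    and A2 :: "'d \<Rightarrow> 'x2::chilbert \<Rightarrow> 'x2" and C2 :: "'x2 \<Rightarrow> 'y"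
  assumes "wc_realization S A1 B1 C1 D1" and "observable A1 C1"
    and "wc_realization S A2 B2 C2 D2" and "observable A2 C2"
  obtains U :: "'x1 \<Rightarrow> 'x2"
  where "unitary U" and "\<And>l x. l \<in> ballB \<Longrightarrow> C2 (resolvent l A2 (U x)) = C1 (resolvent l A1 x)"
proof -
  interpret r1: wc_realization S A1 B1 C1 D1 by fact
  interpret r2: wc_realization S A2 B2 C2 D2 by fact
  define w1 where "w1 p = kernel_vec A1 C1 (fst p) (snd p)" for p
  define w2 where "w2 p = kernel_vec A2 C2 (fst p) (snd p)" for p
  have "\<exists>U. unitary U \<and> (\<forall>x. \<forall>p\<in>ballB \<times> UNIV. cinner (U x) (w2 p) = cinner x (w1 p))"
  proof (rule unitary_from_same_gram)
    show "cinner (w1 p) (w1 q) = cinner (w2 p) (w2 q)" if "p \<in> ballB \<times> UNIV" "q \<in> ballB \<times> UNIV" for p q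
      using that by (auto simp: w1_def w2_def r1.cinner_kernel_vec_kernel_vec r2.cinner_kernel_vec_kernel_vec)
    show "x = 0" if "\<forall>p\<in>ballB \<times> UNIV. cinner x (w1 p) = 0" for x
      using that by (intro r1.kernel_vec_total [OF assms(2)]) (auto simp: w1_def)
    show "x = 0" if "\<forall>p\<in>ballB \<times> UNIV. cinner x (w2 p) = 0" for x
      using that by (intro r2.kernel_vec_total [OF assms(4)]) (auto simp: w2_def)
  qed
  then obtain U where "unitary U" and U: "\<And>x l y. l \<in> ballB \<Longrightarrow> cinner (U x) (w2 (l, y)) = cinner x (w1 (l, y))"
    by auto
  have "C2 (resolvent l A2 (U x)) = C1 (resolvent l A1 x)" if "l \<in> ballB" for l x
    by (rule cinner_ext_left)
      (use U [OF that] in \<open>simp add: w1_def w2_def r1.cinner_kernel_vec r2.cinner_kernel_vec that\<close>)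
  with \<open>unitary U\<close> show thesis
    by (rule that)
qed

lemma observability_identity_resolvent_sq:
  fixes A1 :: "'d::finite \<Rightarrow> 'x1::chilbert \<Rightarrow> 'x1" and C1 :: "'x1 \<Rightarrow> 'y::chilbert"
    and A2 :: "'d \<Rightarrow> 'x2::chilbert \<Rightarrow> 'x2" and C2 :: "'x2 \<Rightarrow> 'y"
    and U :: "'x1 \<Rightarrow> 'x2"
  assumes "wc_realization S1 A1 B1 C1 D1" and "wc_realization S2 A2 B2 C2 D2"
    and obs_op: "\<And>l x. l \<in> ballB \<Longrightarrow> C2 (resolvent l A2 (U x)) = C1 (resolvent l A1 x)"
    and l: "l \<in> ballB"
  shows "C2 (resolvent l A2 (resolvent l A2 (U v))) = C1 (resolvent l A1 (resolvent l A1 v))"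
proof -
  interpret r1: wc_realization S1 A1 B1 C1 D1 by fact
  interpret r2: wc_realization S2 A2 B2 C2 D2 by fact
  have "cinner (C2 (resolvent l A2 (resolvent l A2 (U v)))) y
      = cinner (C1 (resolvent l A1 (resolvent l A1 v))) y" for y
  proof (rule DERIV_unique_on_open)
    show "((\<lambda>s. s * cinner (C2 (resolvent (\<lambda>i. s * l i) A2 (U v))) y)
        has_field_derivative cinner (C2 (resolvent l A2 (resolvent l A2 (U v)))) y) (at 1)"
      using r2.has_field_derivative_resolvent_radial [of 1 l] l by simp
    show "((\<lambda>s. s * cinner (C1 (resolvent (\<lambda>i. s * l i) A1 v)) y)
        has_field_derivative cinner (C1 (resolvent l A1 (resolvent l A1 v))) y) (at 1)"
      using r1.has_field_derivative_resolvent_radial [of 1 l] l by simp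
    show "open {s. (\<lambda>i. s * l i) \<in> ballB}"
      by (rule open_preimage_ballB) (intro continuous_intros)
  qed (use l obs_op in simp_all)
  then show ?thesis
    by (rule cinner_ext_left)
qed

lemma observability_identity_resolvent_sq_A:
  fixes A1 :: "'d::finite \<Rightarrow> 'x1::chilbert \<Rightarrow> 'x1" and C1 :: "'x1 \<Rightarrow> 'y::chilbert"
    and A2 :: "'d \<Rightarrow> 'x2::chilbert \<Rightarrow> 'x2" and C2 :: "'x2 \<Rightarrow> 'y"
    and U :: "'x1 \<Rightarrow> 'x2"
  assumes "wc_realization S1 A1 B1 C1 D1" and "commutative_ops A1"
    and "wc_realization S2 A2 B2 C2 D2" and "commutative_ops A2"
    and obs_op: "\<And>l x. l \<in> ballB \<Longrightarrow> C2 (resolvent l A2 (U x)) = C1 (resolvent l A1 x)"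
    and l: "l \<in> ballB"
  shows "C2 (resolvent l A2 (resolvent l A2 (A2 j (U x))))
           = C1 (resolvent l A1 (resolvent l A1 (A1 j x)))"
proof -
  interpret r1: wc_realization S1 A1 B1 C1 D1 by fact
  interpret r2: wc_realization S2 A2 B2 C2 D2 by fact
  have "cinner (C2 (resolvent l A2 (resolvent l A2 (A2 j (U x))))) y
      = cinner (C1 (resolvent l A1 (resolvent l A1 (A1 j x)))) y" for y
  proof (rule DERIV_unique_on_open)
    show "((\<lambda>t. cinner (C2 (resolvent (\<lambda>i. l i + t * of_bool (i = j)) A2 (U x))) y)
        has_field_derivative cinner (C2 (resolvent l A2 (resolvent l A2 (A2 j (U x))))) y) (at 0)"
      by (rule r2.has_field_derivative_resolvent_coordinate [OF assms(4) l])
    show "((\<lambda>t. cinner (C1 (resolvent (\<lambda>i. l i + t * of_bool (i = j)) A1 x)) y)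
        has_field_derivative cinner (C1 (resolvent l A1 (resolvent l A1 (A1 j x)))) y) (at 0)"
      by (rule r1.has_field_derivative_resolvent_coordinate [OF assms(2) l])
    show "open {t. (\<lambda>i. l i + t * of_bool (i = j)) \<in> ballB}"
      by (rule open_preimage_ballB) (intro continuous_intros)
  qed (use l obs_op in simp_all)
  then show ?thesis
    by (rule cinner_ext_left)
qed

lemma intertwining_from_observability_operators:
  fixes A1 :: "'d::finite \<Rightarrow> 'x1::chilbert \<Rightarrow> 'x1" and C1 :: "'x1 \<Rightarrow> 'y::chilbert"
    and A2 :: "'d \<Rightarrow> 'x2::chilbert \<Rightarrow> 'x2" and C2 :: "'x2 \<Rightarrow> 'y"
    and U :: "'x1 \<Rightarrow> 'x2"
  assumes r1: "wc_realization S1 A1 B1 C1 D1" and "commutative_ops A1"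
    and r2: "wc_realization S2 A2 B2 C2 D2" and "commutative_ops A2" and "observable A2 C2"
    and obs_op: "\<And>l x. l \<in> ballB \<Longrightarrow> C2 (resolvent l A2 (U x)) = C1 (resolvent l A1 x)"
  shows "A2 j (U x) = U (A1 j x)"
proof (rule eq_iff_diff_eq_0 [THEN iffD2], rule wc_realization.observable_resolvent_sq [OF r2 assms(5)])
  fix l :: "'d \<Rightarrow> complex"
  assume "l \<in> ballB"
  then show "C2 (resolvent l A2 (resolvent l A2 (A2 j (U x) - U (A1 j x)))) = 0"
    using observability_identity_resolvent_sq_A [OF r1 assms(2) r2 assms(4) obs_op]
      observability_identity_resolvent_sq [OF r1 r2 obs_op, of l "A1 j x"]
    by (simp add: bounded_clinear_diff wc_realization.bounded_clinear_C [OF r2]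
        wc_realization.bounded_clinear_resolvent [OF r2])
qed

theorem corollary3p7:
  fixes S :: "('d::finite \<Rightarrow> complex) \<Rightarrow> 'u::chilbert \<Rightarrow> 'y::chilbert"
    and A1 :: "'d \<Rightarrow> 'x1::chilbert \<Rightarrow> 'x1" and B1 :: "'d \<Rightarrow> 'u \<Rightarrow> 'x1" and C1 :: "'x1 \<Rightarrow> 'y"
    and A2 :: "'d \<Rightarrow> 'x2::chilbert \<Rightarrow> 'x2" and B2 :: "'d \<Rightarrow> 'u \<Rightarrow> 'x2" and C2 :: "'x2 \<Rightarrow> 'y"
    and D :: "'u \<Rightarrow> 'y"
  assumes "schur_class S"
    and "is_realization S A1 B1 C1 D" and "observable A1 C1"
    and "commutative_ops A1" and "weakly_coisometric A1 B1 C1 D"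
    and "is_realization S A2 B2 C2 D" and "observable A2 C2"
    and "commutative_ops A2" and "weakly_coisometric A2 B2 C2 D"
  shows "\<exists>U :: 'x1 \<Rightarrow> 'x2. unitary U \<and> (\<forall>x. C2 (U x) = C1 x) \<and>
           (\<forall>j x. A2 j (U x) = U (A1 j x))"
proof -
  have r1: "wc_realization S A1 B1 C1 D" and r2: "wc_realization S A2 B2 C2 D"
    using assms by (simp_all add: wc_realization_def)
  obtain U :: "'x1 \<Rightarrow> 'x2" where "unitary U"
    and obs_op: "\<And>l x. l \<in> ballB \<Longrightarrow> C2 (resolvent l A2 (U x)) = C1 (resolvent l A1 x)"
    using observability_operators_unitarily_equivalent [OF r1 assms(3) r2 assms(7)] by blast
  have "C2 (U x) = C1 x" for x
    using obs_op [OF zero_in_ballB, of x] by (simp add: resolvent_zero)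
  moreover have "A2 j (U x) = U (A1 j x)" for j x
    by (rule intertwining_from_observability_operators [OF r1 assms(4) r2 assms(8,7) obs_op])
  ultimately show ?thesis
    using \<open>unitary U\<close> by blast
qed

end
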